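(* Let $C=\operatorname{conv}(\gamma_1\cup\gamma_2)\subset\mathbb{R}^3$, where $\gamma_1(t)=(\cos t,\sin t,1)$ for $t\in[0,\pi/2]$ and $\gamma_2(t)=(\cos t,\sin t,-1)$ for $t\in[0,\pi]$, and let $K=\operatorname{cone}(C\times\{1\})\subset\mathbb{R}^4$. Then $K$ is facially dual complete, but the tangent cone $\mathcal{T}(\bar x;C)$ at $\bar x=(0,1,1)$ is not facially exposed; in particular $K$ is not strongly tangentially exposed. Thus strong tangential exposure is not necessary for facial dual completeness.
   Context: $\mathbb{R}^4$ is identified with its dual. $\operatorname{cone}(S)=\{\lambda s:\lambda\ge0,s\in\operatorname{conv}S\}$. Tangent cone: $\mathcal{T}(x;D)=\operatorname{cl}\{d: x+\epsilon d\in D\text{ for some }\epsilon>0\}$. A face of a closed convex set $D$ is a closed convex $F\subseteq D$ such that $x\in F$, $y,z\in D$, $x\in(y,z)$ imply $y,z\in F$; it is exposed if $F=D\cap H$ for some supporting hyperplane $H$; $D$ is facially exposed if every nonempty face $F\ne D$ is exposed. A closed convex cone $K$ is tangentially exposed if $\mathcal{T}(x;K)\cap\operatorname{span}F=\mathcal{T}(x;F)$ for all faces $F\ne K$, $x\in F$. Lexicographic tangent cones: cones obtained by iterating the tangent-cone operation (tangent cones of $K$, tangent cones of those, etc.); $K$ is strongly tangentially exposed if $K$ and all its lexicographic tangent cones are tangentially exposed. $K$ is facially dual complete if $K^*+F^\perp$ is closed for every nonempty face $F\ne K$, where $K^*=\{s:\langle s,x\rangle\ge0\ \forall x\in K\}$,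 $F^\perp=\{s:\langle s,x\rangle=0\ \forall x\in F\}$. *)

theory Defs
  imports "HOL-Analysis.Analysis"
begin

definition pcone :: "'a::real_vector set \<Rightarrow> 'a set" where
  "pcone S = {c *\<^sub>R s | c s. c \<ge> 0 \<and> s \<in> convex hull S}"

definition tcone :: "'a::real_normed_vector \<Rightarrow> 'a set \<Rightarrow> 'a set" where
  "tcone x D = closure {d. \<exists>e>0. x + e *\<^sub>R d \<in> D}"

definition pface :: "'a::euclidean_space set \<Rightarrow> 'a set \<Rightarrow> bool" where
  "pface F D \<longleftrightarrow> closed F \<and> F face_of D"

definition pexposed :: "'a::euclidean_space set \<Rightarrow> 'a set \<Rightarrow> bool" where
  "pexposed F D \<longleftrightarrow> pface F D \<and>
     (\<exists>a b. a \<noteq> 0 \<and> D \<subseteq> {x. a \<bullet> x \<le> b} \<and> F = D \<inter> {x. a \<bullet> x = b})"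

definition facially_exposed :: "'a::euclidean_space set \<Rightarrow> bool" where
  "facially_exposed D \<longleftrightarrow> (\<forall>F. pface F D \<and> F \<noteq> {} \<and> F \<noteq> D \<longrightarrow> pexposed F D)"

definition tangentially_exposed :: "'a::euclidean_space set \<Rightarrow> bool" where
  "tangentially_exposed K \<longleftrightarrow>
     (\<forall>F x. pface F K \<and> F \<noteq> K \<and> x \<in> F \<longrightarrow> tcone x K \<inter> span F = tcone x F)"

inductive_set lex_tcones :: "'a::euclidean_space set \<Rightarrow> 'a set set" for K where
  base: "x \<in> K \<Longrightarrow> tcone x K \<in> lex_tcones K"
| step: "L \<in> lex_tcones K \<Longrightarrow> x \<in> L \<Longrightarrow> tcone x L \<in> lex_tcones K"

definition strongly_tangentially_exposed :: "'a::euclidean_space set \<Rightarrow> bool" where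
  "strongly_tangentially_exposed K \<longleftrightarrow>
     tangentially_exposed K \<and> (\<forall>L \<in> lex_tcones K. tangentially_exposed L)"

definition dual_cone :: "'a::euclidean_space set \<Rightarrow> 'a set" where
  "dual_cone K = {s. \<forall>x\<in>K. s \<bullet> x \<ge> 0}"

definition perp :: "'a::euclidean_space set \<Rightarrow> 'a set" where
  "perp F = {s. \<forall>x\<in>F. s \<bullet> x = 0}"

definition facially_dual_complete :: "'a::euclidean_space set \<Rightarrow> bool" where
  "facially_dual_complete K \<longleftrightarrow>
     (\<forall>F. pface F K \<and> F \<noteq> {} \<and> F \<noteq> K \<longrightarrow>
        closed {u + v | u v. u \<in> dual_cone K \<and> v \<in> perp F})"

definition gamma1 :: "real \<Rightarrow> real^3" where
  "gamma1 t = vector [cos t, sin t, 1]"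

definition gamma2 :: "real \<Rightarrow> real^3" where
  "gamma2 t = vector [cos t, sin t, -1]"

definition exC :: "(real^3) set" where
  "exC = convex hull (gamma1 ` {0..pi/2} \<union> gamma2 ` {0..pi})"

text \<open>Identification of C \<times> {1} with a subset of R^4.\<close>
definition lift1 :: "real^3 \<Rightarrow> real^4" where
  "lift1 v = vector [v$1, v$2, v$3, 1]"

definition exK :: "(real^4) set" where
  "exK = pcone (lift1 ` exC)"

definition xbar :: "real^3" where
  "xbar = vector [0, 1, 1]"

end

theory Submission
  imports Defs
begin

text \<open>K is the convex cone over the lifted curve G, so every nonempty face F of K is the cone over the
  generators Z = G \<inter> F it contains, and K* + F\<bottom> equals the closed cone F* as soon as every
  functional nonnegative on Z agrees on Z with one that is nonnegative on all of G. When span Z has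
  dimension at most 2 such an extension is built from functionals exposing single generators.
  Otherwise span Z is a hyperplane supporting G. An affine function on the unit circle that is
  nonnegative on an arc and vanishes inside it is tangent there, so either the hyperplane contains a
  whole arc and the functional is a positive constant on the other one, or it meets G in three
  endpoints of the arcs, each of which is exposed within the three.

  At xbar the ray through (0, 0, -1) is a face of the tangent cone T of C, cut out by d2 = 0 and
  then d1 = 0, but the directions towards the bottom circle force every hyperplane exposing it to
  contain (1, 0, 0) \<in> T. Lifted to K, the same directions show that the tangent cone of K at the
  lift of xbar, a lexicographic tangent cone of K, is not tangentially exposed.\<close>

lemma vector_4 [simp]:
  "(vector [x,y,z,w] :: ('a::zero)^4)$1 = x"
  "(vector [x,y,z,w] :: ('a::zero)^4)$2 = y"
  "(vector [x,y,z,w] :: ('a::zero)^4)$3 = z"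
  "(vector [x,y,z,w] :: ('a::zero)^4)$4 = w"
  unfolding vector_def by simp_all

lemma inner_real3: "(a::real^3) \<bullet> b = a$1*b$1 + a$2*b$2 + a$3*b$3"
  by (simp add: inner_vec_def sum_3)

lemma inner_real4: "(a::real^4) \<bullet> b = a$1*b$1 + a$2*b$2 + a$3*b$3 + a$4*b$4"
  by (simp add: inner_vec_def sum_4)

lemma vec3_eq_iff: "(a::real^3) = b \<longleftrightarrow> a$1 = b$1 \<and> a$2 = b$2 \<and> a$3 = b$3"
  by (simp add: vec_eq_iff forall_3)

lemma vec4_eq_iff: "(a::real^4) = b \<longleftrightarrow> a$1 = b$1 \<and> a$2 = b$2 \<and> a$3 = b$3 \<and> a$4 = b$4"
  by (simp add: vec_eq_iff forall_4)

lemma le_zero_if_le_small_multiples: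
  fixes p c :: real
  assumes "0 < \<delta>" "\<And>u. 0 < u \<Longrightarrow> u \<le> \<delta> \<Longrightarrow> p \<le> u * c"
  shows "p \<le> 0"
proof (rule tendsto_lowerbound)
  show "((\<lambda>u. u * c) \<longlongrightarrow> 0) (at_right 0)"
    by (rule tendsto_eq_rhs[OF tendsto_mult_right[OF tendsto_ident_at]]) simp
  show "\<forall>\<^sub>F u in at_right 0. p \<le> u * c"
    using eventually_at_right_real[OF assms(1)] assms(2) by (auto elim: eventually_mono)
qed simp

lemma closed_contains_ray_limit:
  fixes d w :: "'a::real_normed_vector"
  assumes "closed S" "\<And>u. 0 < u \<Longrightarrow> u \<le> 1 \<Longrightarrow> d + u *\<^sub>R w \<in> S"
  shows "d \<in> S"
proof (rule Lim_in_closed_set[OF assms(1)])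
  show "((\<lambda>u. d + u *\<^sub>R w) \<longlongrightarrow> d) (at_right 0)"
    by (rule tendsto_eq_rhs[OF tendsto_add[OF tendsto_const tendsto_scaleR[OF tendsto_ident_at tendsto_const]]])
      simp
  show "\<forall>\<^sub>F u in at_right (0::real). d + u *\<^sub>R w \<in> S"
    using eventually_at_right_real[of 0 1] assms(2) by (auto elim: eventually_mono)
qed simp

section \<open>Convex cones and their faces\<close>

lemma pcone_eq_convex_cone_hull: "S \<noteq> {} \<Longrightarrow> pcone S = convex_cone hull S"
  by (simp add: pcone_def convex_cone_hull_separate_nonempty conic_hull_explicit)

lemma convex_cone_hull_convex_hull: "convex_cone hull (convex hull S) = convex_cone hull S"
  by (metis convex_hull_subset_convex_cone_hull hull_hull hull_mono hull_subset subset_antisym)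

lemma convex_cone_sum:
  assumes "convex_cone K" "finite I" "\<And>i. i \<in> I \<Longrightarrow> f i \<in> K"
  shows "sum f I \<in> K"
  using assms(2,3)
  by (induction I rule: finite_induct) (auto simp: assms(1) convex_cone_contains_0 convex_cone_add)

lemma convex_cone_hull_explicit_mem:
  assumes "x \<in> convex_cone hull G"
  obtains S c where "finite S" "S \<subseteq> G" "\<And>g. g \<in> S \<Longrightarrow> 0 \<le> c g" "x = (\<Sum>g\<in>S. c g *\<^sub>R g)"
proof (cases "G = {}")
  case True
  then show ?thesis using assms that[of "{}" "\<lambda>_. 0"] by simp
next
  case False
  then obtain k y where "x = k *\<^sub>R y" "0 \<le> k" "y \<in> convex hull G"
    using assms by (auto simp: convex_cone_hull_separate_nonempty conic_hull_explicit)
  moreover from \<open>y \<in> convex hull G\<close> obtain S u where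
    "finite S" "S \<subseteq> G" "\<forall>x\<in>S. 0 \<le> u x" "(\<Sum>v\<in>S. u v *\<^sub>R v) = y"
    unfolding convex_hull_explicit by blast
  ultimately show ?thesis
    by (intro that[of S "\<lambda>g. k * u g"]) (auto simp: scaleR_sum_right)
qed

lemma convex_cone_face_of:
  assumes "convex_cone K" "F face_of K" "F \<noteq> {}"
  shows "convex_cone F"
  using assms face_of_conic face_of_imp_convex by (auto simp: convex_cone_def)

lemma face_of_convex_cone_summand:
  assumes K: "convex_cone K" and F: "F face_of K" and "a \<in> K" "b \<in> K" "a + b \<in> F"
  shows "a \<in> F"
proof (cases "a = b")
  case True
  then show ?thesis
    using conic_mul[OF face_of_conic[OF _ F], of "a + b" "1/2"] K assms(5)
    by (auto simp: convex_cone_def scaleR_2[symmetric])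
next
  case False
  have "midpoint a b \<in> F"
    using conic_mul[OF face_of_conic[OF _ F], of "a + b" "1/2"] K assms(5)
    by (auto simp: convex_cone_def midpoint_def)
  then show ?thesis using face_ofD[OF F _ assms(3,4)] False by (metis midpoint_in_open_segment)
qed

lemma span_convex_cone_subset:
  assumes "convex_cone S"
  shows "span S \<subseteq> {a - b | a b. a \<in> S \<and> b \<in> S}"
proof (rule span_minimal)
  have 0: "0 \<in> S" by (rule convex_cone_contains_0[OF assms])
  then show "S \<subseteq> {a - b | a b. a \<in> S \<and> b \<in> S}" by force
  show "subspace {a - b | a b. a \<in> S \<and> b \<in> S}"
    unfolding subspace_def
  proof (intro conjI ballI allI)
    show "0 \<in> {a - b | a b. a \<in> S \<and> b \<in> S}" using 0 by force
  next
    fix x y assume "x \<in> {a - b | a b. a \<in> S \<and> b \<in> S}" "y \<in> {a - b | a b. a \<in> S \<and> b \<in> S}"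
    then obtain a b c d where "x = a - b" "y = c - d" "a \<in> S" "b \<in> S" "c \<in> S" "d \<in> S" by blast
    then show "x + y \<in> {a - b | a b. a \<in> S \<and> b \<in> S}"
      by (intro CollectI exI[of _ "a + c"] exI[of _ "b + d"]) (auto simp: assms convex_cone_add)
  next
    fix r :: real and x assume "x \<in> {a - b | a b. a \<in> S \<and> b \<in> S}"
    then obtain a b where ab: "x = a - b" "a \<in> S" "b \<in> S" by blast
    have conic: "conic S" using assms by (simp add: convex_cone_def)
    show "r *\<^sub>R x \<in> {a - b | a b. a \<in> S \<and> b \<in> S}"
    proof (cases "0 \<le> r")
      case True
      then show ?thesis using ab conic_mul[OF conic]
        by (intro CollectI exI[of _ "r *\<^sub>R a"] exI[of _ "r *\<^sub>R b"]) (auto simp: scaleR_diff_right)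
    next
      case False
      then show ?thesis using ab conic_mul[OF conic, of _ "-r"]
        by (intro CollectI exI[of _ "(-r) *\<^sub>R b"] exI[of _ "(-r) *\<^sub>R a"]) (auto simp: algebra_simps)
    qed
  qed
qed

lemma face_of_convex_cone_span:
  assumes K: "convex_cone K" and F: "F face_of K" "F \<noteq> {}" and "x \<in> K" "x \<in> span F"
  shows "x \<in> F"
proof -
  obtain a b where ab: "x = a - b" "a \<in> F" "b \<in> F"
    using span_convex_cone_subset[OF convex_cone_face_of[OF K F]] assms(5) by blast
  have "b \<in> K" using ab(3) F(1) face_of_imp_subset by blast
  then show ?thesis using face_of_convex_cone_summand[OF K F(1) \<open>x \<in> K\<close>] ab by simp
qed

lemma face_of_convex_cone_hull:
  assumes F: "F face_of convex_cone hull G" "F \<noteq> {}"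
  shows "F = convex_cone hull (G \<inter> F)"
proof -
  let ?K = "convex_cone hull G"
  have cone: "convex_cone F" by (rule convex_cone_face_of[OF convex_cone_convex_cone_hull F])
  then have "convex_cone hull (G \<inter> F) \<subseteq> F" by (simp add: hull_minimal)
  moreover have "F \<subseteq> convex_cone hull (G \<inter> F)"
  proof
    fix x assume "x \<in> F"
    then have "x \<in> ?K" using F(1) face_of_imp_subset by blast
    then obtain S c where S: "finite S" "S \<subseteq> G" "\<And>g. g \<in> S \<Longrightarrow> 0 \<le> c g" "x = (\<Sum>g\<in>S. c g *\<^sub>R g)"
      by (elim convex_cone_hull_explicit_mem) blast
    have "c g *\<^sub>R g \<in> convex_cone hull (G \<inter> F)" if "g \<in> S" for g
    proof (cases "c g = 0")
      case True
      then show ?thesis by (simp add: convex_cone_hull_contains_0)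
    next
      case False
      have in_K: "h \<in> S \<Longrightarrow> c h *\<^sub>R h \<in> ?K" for h
        using S(2,3) by (intro convex_cone_hull_mul hull_inc) auto
      have "x = c g *\<^sub>R g + (\<Sum>h\<in>S-{g}. c h *\<^sub>R h)" using S(1,4) that by (simp add: sum.remove)
      moreover have "(\<Sum>h\<in>S-{g}. c h *\<^sub>R h) \<in> ?K"
        using S(1) in_K by (intro convex_cone_sum[OF convex_cone_convex_cone_hull]) auto
      ultimately have "c g *\<^sub>R g \<in> F"
        using face_of_convex_cone_summand[OF convex_cone_convex_cone_hull F(1) in_K[OF that]] \<open>x \<in> F\<close>
        by simp
      moreover have "conic F" using cone by (simp add: convex_cone_def)
      ultimately have "inverse (c g) *\<^sub>R (c g *\<^sub>R g) \<in> F"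
        using S(3)[OF that] conic_mul[of F "c g *\<^sub>R g" "inverse (c g)"] by simp
      then have "g \<in> G \<inter> F" using False S(2) that by auto
      then show ?thesis using S(3)[OF that] by (intro convex_cone_hull_mul hull_inc)
    qed
    then show "x \<in> convex_cone hull (G \<inter> F)"
      unfolding S(4) using S(1) by (intro convex_cone_sum[OF convex_cone_convex_cone_hull])
  qed
  ultimately show ?thesis by blast
qed

lemma face_of_convex_cone_span_combination:
  assumes K: "convex_cone K" and F: "F face_of K" "F \<noteq> {}"
    and "a \<in> K" "b \<in> K" "0 < \<alpha>" "0 \<le> \<beta>" "\<alpha> *\<^sub>R a + \<beta> *\<^sub>R b \<in> span F"
  shows "a \<in> F"
proof -
  have conic: "conic K" using K by (simp add: convex_cone_def)
  have "\<alpha> *\<^sub>R a \<in> K" "\<beta> *\<^sub>R b \<in> K" using assms(4-7) by (auto intro: conic_mul[OF conic])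
  moreover from this have "\<alpha> *\<^sub>R a + \<beta> *\<^sub>R b \<in> F"
    by (intro face_of_convex_cone_span[OF K F]) (auto simp: K convex_cone_add assms(8))
  ultimately have "\<alpha> *\<^sub>R a \<in> F" by (rule face_of_convex_cone_summand[OF K F(1)])
  then have "inverse \<alpha> *\<^sub>R (\<alpha> *\<^sub>R a) \<in> F"
    using convex_cone_face_of[OF K F] \<open>0 < \<alpha>\<close> conic_mul[of F "\<alpha> *\<^sub>R a" "inverse \<alpha>"]
    by (simp add: convex_cone_def)
  then show ?thesis using \<open>0 < \<alpha>\<close> by simp
qed

lemma face_of_convex_cone_hull_generator:
  assumes F: "F face_of convex_cone hull G" "F \<noteq> {}"
    and "a \<in> G" "b \<in> G" "0 < \<alpha>" "0 \<le> \<beta>" "\<alpha> *\<^sub>R a + \<beta> *\<^sub>R b \<in> span (G \<inter> F)"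
  shows "a \<in> G \<inter> F"
proof -
  have "\<alpha> *\<^sub>R a + \<beta> *\<^sub>R b \<in> span F" using assms(7) span_mono[of "G \<inter> F" F] by blast
  then have "a \<in> F"
    using assms(3-6) by (intro face_of_convex_cone_span_combination[OF convex_cone_convex_cone_hull F])
      (auto intro: hull_inc)
  then show ?thesis using assms(3) by blast
qed

lemma face_of_convex_cone_hull_proper:
  assumes "F face_of convex_cone hull G" "F \<noteq> {}" "F \<noteq> convex_cone hull G"
  shows "\<not> G \<subseteq> F"
proof
  assume "G \<subseteq> F"
  then have "convex_cone hull G \<subseteq> F"
    using convex_cone_face_of[OF convex_cone_convex_cone_hull assms(1,2)] by (simp add: hull_minimal)
  then show False using assms(1,3) face_of_imp_subset by blast
qed

text \<open>A generator on each side of the hyperplane would put a positive combination of them into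
  span Z.\<close>

lemma span_hyperplane_supporting:
  assumes split: "\<And>a b \<alpha> \<beta>. a \<in> G \<Longrightarrow> b \<in> G \<Longrightarrow> 0 < \<alpha> \<Longrightarrow> 0 \<le> \<beta>
                  \<Longrightarrow> \<alpha> *\<^sub>R a + \<beta> *\<^sub>R b \<in> span Z \<Longrightarrow> a \<in> Z"
    and n: "span Z = {x. n \<bullet> x = 0}"
  obtains m where "\<And>g. g \<in> G \<Longrightarrow> 0 \<le> m \<bullet> g" "span Z = {x. m \<bullet> x = 0}"
proof -
  have "(\<forall>g\<in>G. 0 \<le> n \<bullet> g) \<or> (\<forall>g\<in>G. n \<bullet> g \<le> 0)"
  proof (rule ccontr)
    assume "\<not> ?thesis"
    then obtain g1 g2 where g: "g1 \<in> G" "n \<bullet> g1 < 0" "g2 \<in> G" "0 < n \<bullet> g2"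
      by (auto simp: not_le)
    have "(- (n \<bullet> g1)) *\<^sub>R g2 + (n \<bullet> g2) *\<^sub>R g1 \<in> span Z"
      using n by (simp add: inner_add_right algebra_simps)
    then have "g2 \<in> Z" using split[OF g(3) g(1), of "- (n \<bullet> g1)" "n \<bullet> g2"] g(2,4) by simp
    then show False using n g(4) span_base by fastforce
  qed
  then show ?thesis
  proof (elim disjE)
    assume "\<forall>g\<in>G. 0 \<le> n \<bullet> g"
    then show ?thesis using that[of n] n by blast
  next
    assume "\<forall>g\<in>G. n \<bullet> g \<le> 0"
    then show ?thesis using that[of "- n"] n by force
  qed
qed

lemma convex_cone_hull_nonneg:
  assumes "\<And>g. g \<in> G \<Longrightarrow> 0 \<le> u \<bullet> g" "x \<in> convex_cone hull G"
  shows "0 \<le> u \<bullet> x"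
proof -
  have "convex_cone hull G \<subseteq> {x. 0 \<le> u \<bullet> x}"
    using assms(1) by (intro hull_minimal) (auto simp: convex_cone_halfspace_ge)
  then show ?thesis using assms(2) by blast
qed

lemma closed_dual_cone: "closed (dual_cone F)"
proof -
  have "dual_cone F = (\<Inter>x\<in>F. {s. x \<bullet> s \<ge> 0})" by (auto simp: dual_cone_def inner_commute)
  then show ?thesis by (simp add: closed_INT closed_halfspace_ge)
qed

lemma closed_dual_cone_plus_perp:
  assumes "F \<subseteq> K" and extend: "\<And>s. s \<in> dual_cone F \<Longrightarrow> \<exists>u\<in>dual_cone K. \<forall>x\<in>F. u \<bullet> x = s \<bullet> x"
  shows "closed {u + v | u v. u \<in> dual_cone K \<and> v \<in> perp F}"
proof -
  have "{u + v | u v. u \<in> dual_cone K \<and> v \<in> perp F} = dual_cone F"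
  proof
    show "{u + v | u v. u \<in> dual_cone K \<and> v \<in> perp F} \<subseteq> dual_cone F"
      using assms(1) by (auto simp: dual_cone_def perp_def inner_add_left)
    show "dual_cone F \<subseteq> {u + v | u v. u \<in> dual_cone K \<and> v \<in> perp F}"
    proof
      fix s assume "s \<in> dual_cone F"
      then obtain u where "u \<in> dual_cone K" "\<forall>x\<in>F. u \<bullet> x = s \<bullet> x" using extend by blast
      then show "s \<in> {u + v | u v. u \<in> dual_cone K \<and> v \<in> perp F}"
        by (intro CollectI exI[of _ u] exI[of _ "s - u"]) (auto simp: perp_def inner_diff_left)
    qed
  qed
  then show ?thesis by (simp add: closed_dual_cone)
qed

section \<open>Nonnegative extensions of linear functionals\<close>

lemma inner_eq_on_span:
  assumes "\<And>z. z \<in> B \<Longrightarrow> u \<bullet> z = s \<bullet> z" "x \<in> span B"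
  shows "u \<bullet> x = s \<bullet> x"
proof -
  have "span B \<subseteq> {x. (u - s) \<bullet> x = 0}"
    using assms(1) subspace_hyperplane[of "u - s"] by (intro span_minimal) (auto simp: inner_diff_left)
  then show ?thesis using assms(2) by (auto simp: inner_diff_left)
qed

lemma nonneg_extension_dual_family:
  assumes "finite P"
    and w_nonneg: "\<And>p g. p \<in> P \<Longrightarrow> g \<in> G \<Longrightarrow> 0 \<le> w p \<bullet> g"
    and w_pos: "\<And>p. p \<in> P \<Longrightarrow> 0 < w p \<bullet> p"
    and w_zero: "\<And>p q. p \<in> P \<Longrightarrow> q \<in> P \<Longrightarrow> p \<noteq> q \<Longrightarrow> w p \<bullet> q = 0"
    and s_nonneg: "\<And>p. p \<in> P \<Longrightarrow> 0 \<le> s \<bullet> p"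
  shows "\<exists>u. (\<forall>g\<in>G. 0 \<le> u \<bullet> g) \<and> (\<forall>x\<in>span P. u \<bullet> x = s \<bullet> x)"
proof -
  define u where "u = (\<Sum>p\<in>P. (s \<bullet> p / (w p \<bullet> p)) *\<^sub>R w p)"
  have "u \<bullet> q = s \<bullet> q" if "q \<in> P" for q
  proof -
    have "u \<bullet> q = (\<Sum>p\<in>P. s \<bullet> p / (w p \<bullet> p) * (w p \<bullet> q))" by (simp add: u_def inner_sum_left)
    also have "\<dots> = s \<bullet> q / (w q \<bullet> q) * (w q \<bullet> q)"
      using w_zero that by (simp add: sum.remove[OF assms(1) that] sum.neutral)
    finally show ?thesis using w_pos[OF that] by simp
  qed
  moreover have "0 \<le> u \<bullet> g" if "g \<in> G" for g
    unfolding u_def inner_sum_left using w_nonneg w_pos s_nonneg that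
    by (intro sum_nonneg) (auto intro!: mult_nonneg_nonneg divide_nonneg_pos)
  ultimately show ?thesis by (meson inner_eq_on_span)
qed

lemma nonneg_extension_gap:
  assumes m_nonneg: "\<And>g. g \<in> G \<Longrightarrow> m \<bullet> g = 0 \<or> d \<le> m \<bullet> g" and "0 < d" "0 \<le> S"
    and s_bounded: "\<And>g. g \<in> G \<Longrightarrow> - S \<le> s \<bullet> g"
    and s_nonneg: "\<And>g. g \<in> G \<Longrightarrow> m \<bullet> g = 0 \<Longrightarrow> 0 \<le> s \<bullet> g"
  shows "\<exists>u. (\<forall>g\<in>G. 0 \<le> u \<bullet> g) \<and> (\<forall>x. m \<bullet> x = 0 \<longrightarrow> u \<bullet> x = s \<bullet> x)"
proof (intro exI conjI ballI allI impI)
  let ?u = "s + (S / d) *\<^sub>R m"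
  fix g assume g: "g \<in> G"
  show "0 \<le> ?u \<bullet> g"
  proof (cases "m \<bullet> g = 0")
    case True
    then show ?thesis using s_nonneg[OF g] by (simp add: inner_add_left)
  next
    case False
    then have "S \<le> S / d * (m \<bullet> g)"
      using m_nonneg[OF g] \<open>0 < d\<close> \<open>0 \<le> S\<close> by (simp add: le_divide_eq mult_left_mono mult.commute)
    then show ?thesis using s_bounded[OF g] by (simp add: inner_add_left)
  qed
next
  fix x assume "m \<bullet> x = 0"
  then show "(s + (S / d) *\<^sub>R m) \<bullet> x = s \<bullet> x" by (simp add: inner_add_left)
qed

section \<open>Tangent cones\<close>

definition feasible_dirs :: "'a::real_normed_vector \<Rightarrow> 'a set \<Rightarrow> 'a set" where
  "feasible_dirs x D = {d. \<exists>e>0. x + e *\<^sub>R d \<in> D}"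

lemma tcone_eq_closure: "tcone x D = closure (feasible_dirs x D)"
  by (simp add: tcone_def feasible_dirs_def)

lemma closed_tcone: "closed (tcone x D)"
  by (simp add: tcone_def)

lemma feasible_dir_in_tcone: "0 < e \<Longrightarrow> x + e *\<^sub>R d \<in> D \<Longrightarrow> d \<in> tcone x D"
  unfolding tcone_def by (rule closure_subset[THEN subsetD]) blast

lemma convex_feasible_dirs:
  assumes "convex D" "x \<in> D"
  shows "convex (feasible_dirs x D)"
  unfolding convex_def
proof (intro allI impI ballI)
  fix d1 d2 and u v :: real
  assume d: "d1 \<in> feasible_dirs x D" "d2 \<in> feasible_dirs x D" and uv: "0 \<le> u" "0 \<le> v" "u + v = 1"
  obtain e1 e2 where e: "0 < e1" "x + e1 *\<^sub>R d1 \<in> D" "0 < e2" "x + e2 *\<^sub>R d2 \<in> D"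
    using d unfolding feasible_dirs_def by blast
  define e where "e = min e1 e2"
  have "0 < e" using e by (simp add: e_def)
  have shrink: "x + e *\<^sub>R d \<in> D" if "0 < e'" "x + e' *\<^sub>R d \<in> D" "e \<le> e'" for d e'
  proof -
    have "x + e *\<^sub>R d = (1 - e/e') *\<^sub>R x + (e/e') *\<^sub>R (x + e' *\<^sub>R d)"
      using that(1) by (simp add: algebra_simps)
    then show ?thesis
      using convexD[OF assms(1) assms(2) that(2), of "1 - e/e'" "e/e'"] that(1,3) \<open>0 < e\<close> by simp
  qed
  have "u *\<^sub>R (x + e *\<^sub>R d1) + v *\<^sub>R (x + e *\<^sub>R d2) \<in> D"
    using shrink e uv by (intro convexD[OF assms(1)]) (auto simp: e_def)
  moreover have "u *\<^sub>R (x + e *\<^sub>R d1) + v *\<^sub>R (x + e *\<^sub>R d2) = x + e *\<^sub>R (u *\<^sub>R d1 + v *\<^sub>R d2)"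
    using uv(3) by (simp add: algebra_simps flip: scaleR_add_left)
  ultimately show "u *\<^sub>R d1 + v *\<^sub>R d2 \<in> feasible_dirs x D"
    using \<open>0 < e\<close> unfolding feasible_dirs_def by auto
qed

lemma convex_tcone: "convex D \<Longrightarrow> x \<in> D \<Longrightarrow> convex (tcone x D)"
  unfolding tcone_eq_closure by (intro convex_closure convex_feasible_dirs)

lemma tcone_halfspace:
  fixes a :: "'a::euclidean_space"
  assumes "\<And>p. p \<in> D \<Longrightarrow> a \<bullet> p \<le> b" "a \<bullet> x = b" "d \<in> tcone x D"
  shows "a \<bullet> d \<le> 0"
proof -
  have "feasible_dirs x D \<subseteq> {d. a \<bullet> d \<le> 0}"
  proof
    fix d assume "d \<in> feasible_dirs x D"
    then obtain e where e: "0 < e" "x + e *\<^sub>R d \<in> D" unfolding feasible_dirs_def by blast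
    then have "e * (a \<bullet> d) \<le> 0" using assms(1,2) by (force simp: inner_add_right)
    then show "d \<in> {d. a \<bullet> d \<le> 0}" using e(1) by (simp add: mult_le_0_iff)
  qed
  then have "tcone x D \<subseteq> {d. a \<bullet> d \<le> 0}"
    unfolding tcone_eq_closure by (rule closure_minimal) (rule closed_halfspace_le)
  then show ?thesis using assms(3) by blast
qed

lemma tcone_linear_image:
  fixes f :: "'a::euclidean_space \<Rightarrow> 'b::euclidean_space"
  assumes "linear f" and "\<And>e d. 0 < e \<Longrightarrow> x + e *\<^sub>R d \<in> D \<Longrightarrow> y + e *\<^sub>R f d \<in> E"
  shows "f ` tcone x D \<subseteq> tcone y E"
proof -
  have "f ` feasible_dirs x D \<subseteq> feasible_dirs y E"
    using assms(2) unfolding feasible_dirs_def by blast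
  then have "closure (f ` feasible_dirs x D) \<subseteq> tcone y E"
    unfolding tcone_eq_closure by (rule closure_mono)
  then show ?thesis
    unfolding tcone_eq_closure using closure_linear_image_subset[OF assms(1)] by blast
qed

section \<open>The cones C and K\<close>

text \<open>The curve gamma1 runs through the quarter circle at height 1 and gamma2 through the upper half
  circle at height -1; the generators of K are their points lifted by lift1.\<close>

definition quarter_circle :: "(real \<times> real) set" where
  "quarter_circle = {(x, y). x\<^sup>2 + y\<^sup>2 = 1 \<and> 0 \<le> x \<and> 0 \<le> y}"

definition half_circle :: "(real \<times> real) set" where
  "half_circle = {(x, y). x\<^sup>2 + y\<^sup>2 = 1 \<and> 0 \<le> y}"

definition top3 :: "real \<Rightarrow> real \<Rightarrow> real^3" where "top3 x y = vector [x, y, 1]"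
definition bot3 :: "real \<Rightarrow> real \<Rightarrow> real^3" where "bot3 x y = vector [x, y, -1]"
definition top4 :: "real \<Rightarrow> real \<Rightarrow> real^4" where "top4 x y = vector [x, y, 1, 1]"
definition bot4 :: "real \<Rightarrow> real \<Rightarrow> real^4" where "bot4 x y = vector [x, y, -1, 1]"

definition generators :: "(real^4) set" where
  "generators = (\<lambda>(x, y). top4 x y) ` quarter_circle \<union> (\<lambda>(x, y). bot4 x y) ` half_circle"

definition lift0 :: "real^3 \<Rightarrow> real^4" where "lift0 v = vector [v$1, v$2, v$3, 0]"

lemma unit_circle_abs_le_1:
  fixes x y :: real
  assumes "x\<^sup>2 + y\<^sup>2 = 1"
  shows "\<bar>x\<bar> \<le> 1" "\<bar>y\<bar> \<le> 1"
proof -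
  have "x\<^sup>2 \<le> 1" "y\<^sup>2 \<le> 1" using assms zero_le_power2[of x] zero_le_power2[of y] by linarith+
  then show "\<bar>x\<bar> \<le> 1" "\<bar>y\<bar> \<le> 1" by (simp_all add: abs_square_le_1)
qed

lemma unit_circle_inner_le_1:
  fixes x y x0 y0 :: real
  assumes "x\<^sup>2 + y\<^sup>2 = 1" "x0\<^sup>2 + y0\<^sup>2 = 1"
  shows "x0 * x + y0 * y \<le> 1"
    and "x0 * x + y0 * y = 1 \<longleftrightarrow> x = x0 \<and> y = y0"
proof -
  have eq: "(x - x0)\<^sup>2 + (y - y0)\<^sup>2 = 2 - 2 * (x0 * x + y0 * y)"
    using assms by (simp add: power2_diff algebra_simps)
  then have "0 \<le> 2 - 2 * (x0 * x + y0 * y)" by (metis add_nonneg_nonneg zero_le_power2)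
  then show "x0 * x + y0 * y \<le> 1" by argo
  show "x0 * x + y0 * y = 1 \<longleftrightarrow> x = x0 \<and> y = y0"
  proof
    assume "x0 * x + y0 * y = 1"
    then have "(x - x0)\<^sup>2 + (y - y0)\<^sup>2 = 0" using eq by simp
    then show "x = x0 \<and> y = y0" by (simp add: sum_power2_eq_zero_iff)
  qed (use assms in \<open>simp add: power2_eq_square\<close>)
qed

lemma quarter_circle_sum_ge_1:
  assumes "(x, y) \<in> quarter_circle"
  shows "1 \<le> x + y"
proof -
  have u: "x\<^sup>2 + y\<^sup>2 = 1" "0 \<le> x" "0 \<le> y" using assms by (auto simp: quarter_circle_def)
  then have "x \<le> 1" "y \<le> 1" using unit_circle_abs_le_1[OF u(1)] by auto
  then have "x\<^sup>2 \<le> x" "y\<^sup>2 \<le> y" using u(2,3) by (simp_all add: power2_eq_square mult_left_le)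
  then show ?thesis using u(1) by linarith
qed

lemma one_plus_square_pos: "0 < 1 + (t::real)\<^sup>2"
  by (simp add: add_pos_nonneg)

lemma rational_circle_point:
  fixes u :: real
  shows "(2*u/(1+u\<^sup>2))\<^sup>2 + ((1-u\<^sup>2)/(1+u\<^sup>2))\<^sup>2 = 1"
proof -
  have "1 + u\<^sup>2 \<noteq> 0" using one_plus_square_pos[of u] by simp
  moreover have "(2*u)\<^sup>2 + (1-u\<^sup>2)\<^sup>2 = (1+u\<^sup>2)\<^sup>2" by algebra
  ultimately show ?thesis by (simp add: power_divide add_divide_distrib[symmetric])
qed

lemma rational_circle_arcs:
  fixes u :: real
  assumes "0 \<le> u" "u \<le> 1"
  shows "(2*u/(1+u\<^sup>2), (1-u\<^sup>2)/(1+u\<^sup>2)) \<in> quarter_circle"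
    and "(2*u/(1+u\<^sup>2), (1-u\<^sup>2)/(1+u\<^sup>2)) \<in> half_circle"
    and "(-(2*u/(1+u\<^sup>2)), (1-u\<^sup>2)/(1+u\<^sup>2)) \<in> half_circle"
proof -
  have "u\<^sup>2 \<le> 1" using assms by (simp add: abs_square_le_1)
  then show "(2*u/(1+u\<^sup>2), (1-u\<^sup>2)/(1+u\<^sup>2)) \<in> quarter_circle"
    "(2*u/(1+u\<^sup>2), (1-u\<^sup>2)/(1+u\<^sup>2)) \<in> half_circle"
    "(-(2*u/(1+u\<^sup>2)), (1-u\<^sup>2)/(1+u\<^sup>2)) \<in> half_circle"
    using rational_circle_point[of u] assms by (auto simp: quarter_circle_def half_circle_def)
qed

lemma curve_eq:
  "gamma1 ` {0..pi/2} \<union> gamma2 ` {0..pi}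
     = (\<lambda>(x, y). top3 x y) ` quarter_circle \<union> (\<lambda>(x, y). bot3 x y) ` half_circle"
proof -
  have "gamma1 ` {0..pi/2} = (\<lambda>(x, y). top3 x y) ` quarter_circle"
  proof -
    have "quarter_circle = (\<lambda>t. (cos t, sin t)) ` {0..pi/2}"
      using sincos_total_pi_half
      by (fastforce simp: quarter_circle_def image_iff intro: cos_ge_zero sin_ge_zero)
    moreover have "gamma1 = (\<lambda>(x, y). top3 x y) \<circ> (\<lambda>t. (cos t, sin t))"
      by (auto simp: gamma1_def top3_def)
    ultimately show ?thesis by (metis image_comp)
  qed
  moreover have "gamma2 ` {0..pi} = (\<lambda>(x, y). bot3 x y) ` half_circle"
  proof -
    have "half_circle = (\<lambda>t. (cos t, sin t)) ` {0..pi}"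
      using sincos_total_pi by (fastforce simp: half_circle_def image_iff intro: sin_ge_zero)
    moreover have "gamma2 = (\<lambda>(x, y). bot3 x y) \<circ> (\<lambda>t. (cos t, sin t))"
      by (auto simp: gamma2_def bot3_def)
    ultimately show ?thesis by (metis image_comp)
  qed
  ultimately show ?thesis by simp
qed

lemma lift1_top3 [simp]: "lift1 (top3 x y) = top4 x y"
  and lift1_bot3 [simp]: "lift1 (bot3 x y) = bot4 x y"
  by (simp_all add: lift1_def top3_def top4_def bot3_def bot4_def vec4_eq_iff)

lemma linear_lift0: "linear lift0"
  unfolding linear_iff by (simp add: lift0_def vec4_eq_iff)

lemma lift1_eq_lift0: "lift1 v = vector [0, 0, 0, 1] + lift0 v"
  by (simp add: lift1_def lift0_def vec4_eq_iff)

lemma lift1_convex_hull: "lift1 ` (convex hull S) = convex hull (lift1 ` S)"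
proof -
  have "lift1 ` T = (\<lambda>x. vector [0, 0, 0, 1] + x) ` (lift0 ` T)" for T
    by (simp add: lift1_eq_lift0 image_image)
  then show ?thesis
    by (simp add: convex_hull_translation convex_hull_linear_image[OF linear_lift0])
qed

lemma lift1_exC: "lift1 ` exC = convex hull generators"
proof -
  have "lift1 ` ((\<lambda>(x, y). top3 x y) ` quarter_circle \<union> (\<lambda>(x, y). bot3 x y) ` half_circle) = generators"
    by (force simp: generators_def image_Un image_image)
  then show ?thesis unfolding exC_def curve_eq lift1_convex_hull by simp
qed

lemma exK_eq_convex_cone_hull: "exK = convex_cone hull generators"
proof -
  have "generators \<noteq> {}" using rational_circle_arcs(1)[of 0] by (auto simp: generators_def)
  then show ?thesis
    unfolding exK_def lift1_exC
    by (simp add: pcone_eq_convex_cone_hull convex_cone_hull_convex_hull)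
qed

lemma exK_eq_scaled_lift: "exK = {c *\<^sub>R lift1 p | c p. 0 \<le> c \<and> p \<in> exC}"
proof -
  have "convex hull (lift1 ` exC) = lift1 ` exC" unfolding lift1_exC by simp
  then show ?thesis unfolding exK_def pcone_def by auto
qed

lemma exC_le:
  assumes "\<And>x y. (x, y) \<in> quarter_circle \<Longrightarrow> a \<bullet> top3 x y \<le> b"
    and "\<And>x y. (x, y) \<in> half_circle \<Longrightarrow> a \<bullet> bot3 x y \<le> b"
    and "p \<in> exC"
  shows "a \<bullet> p \<le> b"
proof -
  have "exC \<subseteq> {p. a \<bullet> p \<le> b}"
    unfolding exC_def curve_eq using assms(1,2)
    by (intro hull_minimal) (auto simp: convex_halfspace_le)
  then show ?thesis using assms(3) by blast
qed

lemma exK_le_of_exC_le: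
  assumes "\<And>p. p \<in> exC \<Longrightarrow> a \<bullet> p \<le> b" "y \<in> exK"
  shows "vector [a$1, a$2, a$3, -b] \<bullet> y \<le> 0"
proof -
  obtain c p where cp: "y = c *\<^sub>R lift1 p" "0 \<le> c" "p \<in> exC"
    using assms(2) unfolding exK_eq_scaled_lift by blast
  have "vector [a$1, a$2, a$3, -b] \<bullet> lift1 p = a \<bullet> p - b"
    by (simp add: lift1_def inner_real3 inner_real4)
  then show ?thesis using cp assms(1)[OF cp(3)] by (simp add: mult_nonneg_nonpos)
qed

lemma top4_in_generators: "(x, y) \<in> quarter_circle \<Longrightarrow> top4 x y \<in> generators"
  and bot4_in_generators: "(x, y) \<in> half_circle \<Longrightarrow> bot4 x y \<in> generators"
  unfolding generators_def by force+

lemma generators_cases: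
  assumes "g \<in> generators"
  obtains x y where "(x, y) \<in> quarter_circle" "g = top4 x y"
    | x y where "(x, y) \<in> half_circle" "g = bot4 x y"
  using assms unfolding generators_def by auto

lemma generator_coords:
  assumes "g \<in> generators"
  shows "(g$1)\<^sup>2 + (g$2)\<^sup>2 = 1" "0 \<le> g$2" "g$4 = 1" "(g$3 = 1 \<and> 0 \<le> g$1) \<or> g$3 = -1"
  using assms
  by (auto elim!: generators_cases simp: quarter_circle_def half_circle_def top4_def bot4_def)

lemma generators_eqI:
  assumes "g \<in> generators" "h \<in> generators" "g$1 = h$1" "g$2 = h$2" "g$3 = h$3"
  shows "g = h"
  using generator_coords[OF assms(1)] generator_coords[OF assms(2)] assms(3-5)
  by (simp add: vec4_eq_iff)

lemma inner_top4: "n \<bullet> top4 x y = n$1 * x + n$2 * y + (n$3 + n$4)"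
  and inner_bot4: "n \<bullet> bot4 x y = n$1 * x + n$2 * y + (n$4 - n$3)"
  by (simp_all add: inner_real4 top4_def bot4_def)

lemma inner_generator_bounded:
  assumes "g \<in> generators"
  shows "- (\<bar>s$1\<bar> + \<bar>s$2\<bar> + \<bar>s$3\<bar> + \<bar>s$4\<bar>) \<le> s \<bullet> g"
proof -
  have "\<bar>g$i\<bar> \<le> 1" for i :: 4
    using generator_coords[OF assms] unit_circle_abs_le_1[of "g$1" "g$2"] exhaust_4[of i] by auto
  then have "\<bar>s$i * g$i\<bar> \<le> \<bar>s$i\<bar>" for i by (simp add: abs_mult mult_left_le)
  from this[of 1] this[of 2] this[of 3] this[of 4] show ?thesis unfolding inner_real4 by linarith
qed

section \<open>Affine functions on the unit circle\<close>

text \<open>The rotation of the plane by the angle 2 arctan t, written with rational functions of t.\<close>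

definition rot :: "real \<Rightarrow> real \<times> real \<Rightarrow> real \<times> real" where
  "rot t = (\<lambda>(x, y). (((1 - t\<^sup>2) * x - 2 * t * y) / (1 + t\<^sup>2), ((1 - t\<^sup>2) * y + 2 * t * x) / (1 + t\<^sup>2)))"

lemma rot_unit_circle:
  assumes "x\<^sup>2 + y\<^sup>2 = 1" "rot t (x, y) = (X, Y)"
  shows "X\<^sup>2 + Y\<^sup>2 = 1"
proof -
  have d: "1 + t\<^sup>2 \<noteq> 0" using one_plus_square_pos[of t] by simp
  have "((1 - t\<^sup>2) * x - 2 * t * y)\<^sup>2 + ((1 - t\<^sup>2) * y + 2 * t * x)\<^sup>2 = (1 + t\<^sup>2)\<^sup>2 * (x\<^sup>2 + y\<^sup>2)"
    by algebra
  then show ?thesis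
    using assms d by (auto simp: rot_def power_divide add_divide_distrib[symmetric])
qed

lemma affine_rot:
  "a * fst (rot t (x, y)) + b * snd (rot t (x, y))
     = ((1 - t\<^sup>2) * (a * x + b * y) + 2 * t * (b * x - a * y)) / (1 + t\<^sup>2)"
  by (simp add: rot_def add_divide_distrib[symmetric] times_divide_eq_right[symmetric] algebra_simps)

text \<open>The conclusion says that the gradient (a, b) is parallel to (x0, y0): the affine function is
  tangent to the circle at its zero.\<close>

lemma tangent_at_zero:
  fixes a b c x0 y0 \<delta> :: real
  assumes "x0\<^sup>2 + y0\<^sup>2 = 1" "a * x0 + b * y0 + c = 0" "0 < \<delta>"
    and nonneg: "\<And>t. \<bar>t\<bar> \<le> \<delta> \<Longrightarrow> 0 \<le> a * fst (rot t (x0, y0)) + b * snd (rot t (x0, y0)) + c"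
  shows "b * x0 = a * y0"
proof -
  define m k where "m = a * x0 + b * y0" and "k = b * x0 - a * y0"
  have ineq: "t\<^sup>2 * m \<le> t * k" if "\<bar>t\<bar> \<le> \<delta>" for t
  proof -
    have D: "0 < 1 + t\<^sup>2" by (rule one_plus_square_pos)
    have "0 \<le> ((1 - t\<^sup>2) * m + 2 * t * k) / (1 + t\<^sup>2) - m"
      using nonneg[OF that] assms(2) unfolding affine_rot m_def k_def by linarith
    also have "\<dots> = 2 * (t * k - t\<^sup>2 * m) / (1 + t\<^sup>2)"
      using D by (simp add: field_simps)
    finally show ?thesis using D by (simp add: zero_le_divide_iff)
  qed
  \<comment> \<open>for t of either sign this forces the first-order coefficient k to vanish\<close>
  have "- k \<le> u * (- m) \<and> k \<le> u * (- m)" if "0 < u" "u \<le> \<delta>" for u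
  proof -
    have "u * (u * m) \<le> u * k" "u * (u * m) \<le> u * (- k)"
      using ineq[of u] ineq[of "- u"] that by (simp_all add: power2_eq_square mult.assoc)
    then have "u * m \<le> k" "u * m \<le> - k"
      using that by (simp_all only: mult_le_cancel_left_pos)
    then show ?thesis by simp
  qed
  then have "- k \<le> 0" "k \<le> 0"
    using le_zero_if_le_small_multiples[OF \<open>0 < \<delta>\<close>] by blast+
  then show ?thesis unfolding m_def k_def by simp
qed

lemma rot_nonneg_coord:
  fixes t p q :: real
  assumes "\<bar>t\<bar> \<le> 1/2" "\<bar>t\<bar> \<le> p/4" "\<bar>q\<bar> \<le> 1"
  shows "0 \<le> ((1 - t\<^sup>2) * p + 2 * t * q) / (1 + t\<^sup>2)"
proof -
  have "t\<^sup>2 \<le> 1/4"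
    using assms(1) abs_le_square_iff[of t "1/2"] by (simp add: power_divide)
  then have "3/4 * p \<le> (1 - t\<^sup>2) * p" using assms(1,2) by (intro mult_right_mono) auto
  moreover have "\<bar>2 * t * q\<bar> \<le> 2 * \<bar>t\<bar>"
    using assms(3) by (simp add: abs_mult mult_left_le)
  ultimately have "0 \<le> (1 - t\<^sup>2) * p + 2 * t * q" using assms(2) by linarith
  then show ?thesis by (simp add: add_pos_nonneg)
qed

lemma rot_quarter_circle:
  assumes "(x0, y0) \<in> quarter_circle" "\<bar>t\<bar> \<le> min (1/2) (min (x0/4) (y0/4))"
  shows "rot t (x0, y0) \<in> quarter_circle"
proof -
  have c: "x0\<^sup>2 + y0\<^sup>2 = 1" using assms(1) by (simp add: quarter_circle_def)
  have "\<bar>x0\<bar> \<le> 1" "\<bar>- y0\<bar> \<le> 1" using unit_circle_abs_le_1[OF c] by auto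
  then have "0 \<le> fst (rot t (x0, y0))" "0 \<le> snd (rot t (x0, y0))"
    using assms(2) rot_nonneg_coord[of t x0 "- y0"] rot_nonneg_coord[of t y0 x0] by (auto simp: rot_def)
  moreover have "(fst (rot t (x0, y0)))\<^sup>2 + (snd (rot t (x0, y0)))\<^sup>2 = 1"
    using rot_unit_circle[OF c] by (metis prod.collapse)
  ultimately show ?thesis by (simp add: quarter_circle_def case_prod_beta)
qed

lemma rot_half_circle:
  assumes "(x0, y0) \<in> half_circle" "\<bar>t\<bar> \<le> min (1/2) (y0/4)"
  shows "rot t (x0, y0) \<in> half_circle"
proof -
  have c: "x0\<^sup>2 + y0\<^sup>2 = 1" using assms(1) by (simp add: half_circle_def)
  have "\<bar>x0\<bar> \<le> 1" using unit_circle_abs_le_1[OF c] by auto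
  then have "0 \<le> snd (rot t (x0, y0))"
    using assms(2) rot_nonneg_coord[of t y0 x0] by (auto simp: rot_def)
  moreover have "(fst (rot t (x0, y0)))\<^sup>2 + (snd (rot t (x0, y0)))\<^sup>2 = 1"
    using rot_unit_circle[OF c] by (metis prod.collapse)
  ultimately show ?thesis by (simp add: half_circle_def case_prod_beta)
qed

lemma tangent_gradient:
  fixes a b x0 y0 :: real
  assumes "x0\<^sup>2 + y0\<^sup>2 = 1" "b * x0 = a * y0"
  shows "a = (a * x0 + b * y0) * x0" "b = (a * x0 + b * y0) * y0"
proof -
  have "(a * x0 + b * y0) * x0 = a * x0\<^sup>2 + (b * x0) * y0" by (simp add: algebra_simps power2_eq_square)
  also have "\<dots> = a * (x0\<^sup>2 + y0\<^sup>2)" using assms(2) by (simp add: algebra_simps power2_eq_square)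
  finally show "a = (a * x0 + b * y0) * x0" using assms(1) by simp
  have "(a * x0 + b * y0) * y0 = (a * y0) * x0 + b * y0\<^sup>2" by (simp add: algebra_simps power2_eq_square)
  also have "\<dots> = b * (x0\<^sup>2 + y0\<^sup>2)" using assms(2) by (simp add: algebra_simps power2_eq_square)
  finally show "b = (a * x0 + b * y0) * y0" using assms(1) by simp
qed

lemma tangent_zero_unique:
  fixes a b c x y x0 y0 :: real
  assumes "x0\<^sup>2 + y0\<^sup>2 = 1" "x\<^sup>2 + y\<^sup>2 = 1" "b * x0 = a * y0" "a * x0 + b * y0 < 0"
    and "0 \<le> a * x0 + b * y0 + c" "a * x + b * y + c = 0"
  shows "x = x0 \<and> y = y0"
proof -
  define m where "m = a * x0 + b * y0"
  have "a * x + b * y = m * (x0 * x + y0 * y)"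
    using tangent_gradient[OF assms(1,3)] unfolding m_def by (metis distrib_left mult.assoc)
  then have "m * (x0 * x + y0 * y) \<le> m * 1" using assms(5,6) m_def by simp
  then have "1 \<le> x0 * x + y0 * y" using assms(4) m_def by (simp add: mult_le_cancel_left_neg)
  then show ?thesis using unit_circle_inner_le_1[OF assms(2,1)] by simp
qed

text \<open>When x0 < 0, the top (0, 1) is the only point of the quarter circle maximizing the inner
  product with (x0, y0).\<close>

lemma tangent_zero_quarter_circle_top:
  fixes a b c x y x0 y0 :: real
  assumes "x0\<^sup>2 + y0\<^sup>2 = 1" "x0 < 0" "0 < y0" "b * x0 = a * y0" "a * x0 + b * y0 < 0"
    and "0 \<le> a * 0 + b * 1 + c" "(x, y) \<in> quarter_circle" "a * x + b * y + c = 0"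
  shows "x = 0 \<and> y = 1"
proof -
  define m where "m = a * x0 + b * y0"
  have ab: "a = m * x0" "b = m * y0" using tangent_gradient[OF assms(1,4)] m_def by simp_all
  have u: "x\<^sup>2 + y\<^sup>2 = 1" "0 \<le> x" "0 \<le> y" using assms(7) by (auto simp: quarter_circle_def)
  have "m * (x0 * x + y0 * y) \<le> m * y0" using assms(6,8) ab by (simp add: algebra_simps)
  then have "y0 \<le> x0 * x + y0 * y" using assms(5) m_def by (simp add: mult_le_cancel_left_neg)
  moreover have "x0 * x \<le> 0" using assms(2) u(2) by (simp add: mult_nonpos_nonneg)
  moreover have "y0 * y \<le> y0" using unit_circle_abs_le_1(2)[OF u(1)] assms(3) by (simp add: mult_left_le)
  ultimately have "x0 * x = 0" by linarith
  then have "x = 0" using assms(2) by simp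
  then show ?thesis using u by (simp add: power2_eq_1_iff)
qed

lemma tangent_slope_neg:
  fixes a b c x0 y0 :: real
  assumes "x0\<^sup>2 + y0\<^sup>2 = 1" "y0 \<noteq> 0" "b * x0 = a * y0" "a \<noteq> 0 \<or> b \<noteq> 0"
    and "a * x0 + b * y0 + c = 0" "0 \<le> a + c"
  shows "a * x0 + b * y0 < 0"
proof -
  define m where "m = a * x0 + b * y0"
  have ab: "a = m * x0" "b = m * y0" using tangent_gradient[OF assms(1,3)] m_def by simp_all
  then have "m \<noteq> 0" using assms(4) by auto
  have "0 < y0\<^sup>2" using assms(2) by simp
  then have "x0\<^sup>2 < 1" using assms(1) by linarith
  then have "x0 < 1" by (simp add: abs_square_less_1)
  have "c = - m" using assms(5) m_def by simp
  then have "0 \<le> m * (x0 - 1)" using assms(6) ab(1) by (simp add: algebra_simps)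
  then have "m \<le> 0" using \<open>x0 < 1\<close> by (simp add: zero_le_mult_iff)
  then show ?thesis using \<open>m \<noteq> 0\<close> m_def by simp
qed

lemma quarter_circle_interior_zero:
  fixes a b c1 c2 x0 y0 :: real
  assumes Q: "\<And>x y. (x, y) \<in> quarter_circle \<Longrightarrow> 0 \<le> a * x + b * y + c1"
    and H: "\<And>x y. (x, y) \<in> half_circle \<Longrightarrow> 0 \<le> a * x + b * y + c2"
    and "a \<noteq> 0 \<or> b \<noteq> 0"
    and p0: "(x0, y0) \<in> quarter_circle" "0 < x0" "0 < y0" "a * x0 + b * y0 + c1 = 0"
  shows "\<And>x y. (x, y) \<in> quarter_circle \<Longrightarrow> a * x + b * y + c1 = 0 \<Longrightarrow> x = x0 \<and> y = y0"
    and "\<And>x y. (x, y) \<in> half_circle \<Longrightarrow> a * x + b * y + c2 = 0 \<Longrightarrow> x = x0 \<and> y = y0"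
proof -
  have c: "x0\<^sup>2 + y0\<^sup>2 = 1" using p0(1) by (simp add: quarter_circle_def)
  have tangent: "b * x0 = a * y0"
  proof (rule tangent_at_zero[OF c p0(4)])
    show "0 < min (1/2) (min (x0/4) (y0/4))" using p0 by simp
    fix t assume "\<bar>t\<bar> \<le> min (1/2) (min (x0/4) (y0/4))"
    then have "rot t (x0, y0) \<in> quarter_circle" by (rule rot_quarter_circle[OF p0(1)])
    then show "0 \<le> a * fst (rot t (x0, y0)) + b * snd (rot t (x0, y0)) + c1"
      using Q by (metis prod.collapse)
  qed
  have "(1, 0) \<in> quarter_circle" by (simp add: quarter_circle_def)
  then have neg: "a * x0 + b * y0 < 0"
    using tangent_slope_neg[OF c _ tangent assms(3) p0(4)] Q[of 1 0] p0(3) by simp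
  show "x = x0 \<and> y = y0" if "(x, y) \<in> quarter_circle" "a * x + b * y + c1 = 0" for x y
    using tangent_zero_unique[OF c _ tangent neg _ that(2)] that(1) p0(4)
    by (simp add: quarter_circle_def)
  have "(x0, y0) \<in> half_circle" using p0(1) by (simp add: quarter_circle_def half_circle_def)
  then show "x = x0 \<and> y = y0" if "(x, y) \<in> half_circle" "a * x + b * y + c2 = 0" for x y
    using tangent_zero_unique[OF c _ tangent neg _ that(2)] that(1) H[of x0 y0]
    by (simp add: half_circle_def)
qed

lemma half_circle_interior_zero:
  fixes a b c1 c2 x0 y0 :: real
  assumes Q: "\<And>x y. (x, y) \<in> quarter_circle \<Longrightarrow> 0 \<le> a * x + b * y + c1"
    and H: "\<And>x y. (x, y) \<in> half_circle \<Longrightarrow> 0 \<le> a * x + b * y + c2"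
    and "a \<noteq> 0 \<or> b \<noteq> 0"
    and p0: "(x0, y0) \<in> half_circle" "0 < y0" "a * x0 + b * y0 + c2 = 0"
  shows "\<And>x y. (x, y) \<in> half_circle \<Longrightarrow> a * x + b * y + c2 = 0 \<Longrightarrow> x = x0 \<and> y = y0"
    and "\<exists>w. \<forall>x y. (x, y) \<in> quarter_circle \<longrightarrow> a * x + b * y + c1 = 0 \<longrightarrow> (x, y) = w"
proof -
  have c: "x0\<^sup>2 + y0\<^sup>2 = 1" using p0(1) by (simp add: half_circle_def)
  have tangent: "b * x0 = a * y0"
  proof (rule tangent_at_zero[OF c p0(3)])
    show "0 < min (1/2) (y0/4)" using p0 by simp
    fix t assume "\<bar>t\<bar> \<le> min (1/2) (y0/4)"
    then have "rot t (x0, y0) \<in> half_circle" by (rule rot_half_circle[OF p0(1)])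
    then show "0 \<le> a * fst (rot t (x0, y0)) + b * snd (rot t (x0, y0)) + c2"
      using H by (metis prod.collapse)
  qed
  have "(1, 0) \<in> half_circle" by (simp add: half_circle_def)
  then have neg: "a * x0 + b * y0 < 0"
    using tangent_slope_neg[OF c _ tangent assms(3) p0(3)] H[of 1 0] p0(2) by simp
  show "x = x0 \<and> y = y0" if "(x, y) \<in> half_circle" "a * x + b * y + c2 = 0" for x y
    using tangent_zero_unique[OF c _ tangent neg _ that(2)] that(1) p0(3)
    by (simp add: half_circle_def)
  show "\<exists>w. \<forall>x y. (x, y) \<in> quarter_circle \<longrightarrow> a * x + b * y + c1 = 0 \<longrightarrow> (x, y) = w"
  proof (cases "0 \<le> x0")
    case True
    then have "(x0, y0) \<in> quarter_circle" using p0(1) by (simp add: quarter_circle_def half_circle_def)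
    then have "(x, y) = (x0, y0)" if "(x, y) \<in> quarter_circle" "a * x + b * y + c1 = 0" for x y
      using tangent_zero_unique[OF c _ tangent neg _ that(2)] that(1) Q[of x0 y0]
      by (simp add: quarter_circle_def)
    then show ?thesis by blast
  next
    case False
    have "(x, y) = (0, 1)" if "(x, y) \<in> quarter_circle" "a * x + b * y + c1 = 0" for x y
      using tangent_zero_quarter_circle_top[OF c _ p0(2) tangent neg _ that] False Q[of 0 1]
      by (simp add: quarter_circle_def)
    then show ?thesis by blast
  qed
qed

section \<open>Facial dual completeness of K\<close>

text \<open>expose g exposes the ray of K through the generator g.\<close>

definition expose :: "real^4 \<Rightarrow> real^4" where
  "expose g = vector [-(g$1), -(g$2), -(g$3)/2, 3/2]"

lemma inner_expose:
  assumes "g \<in> generators" "h \<in> generators"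
  shows "expose g \<bullet> h = (1 - (g$1 * h$1 + g$2 * h$2)) + (1 - g$3 * h$3) / 2"
  using generator_coords(3)[OF assms(2)] by (simp add: expose_def inner_real4 field_simps)

lemma expose_nonneg:
  assumes "g \<in> generators" "h \<in> generators"
  shows "0 \<le> expose g \<bullet> h"
  using generator_coords[OF assms(1)] generator_coords[OF assms(2)]
    unit_circle_inner_le_1(1)[of "h$1" "h$2" "g$1" "g$2"]
  by (auto simp: inner_expose[OF assms])

lemma expose_eq_0_iff:
  assumes "g \<in> generators" "h \<in> generators"
  shows "expose g \<bullet> h = 0 \<longleftrightarrow> h = g"
proof
  assume "expose g \<bullet> h = 0"
  moreover have "g$1 * h$1 + g$2 * h$2 \<le> 1" "g$3 * h$3 \<le> 1"
    using generator_coords[OF assms(1)] generator_coords[OF assms(2)]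
      unit_circle_inner_le_1(1)[of "h$1" "h$2" "g$1" "g$2"] by auto
  ultimately have "g$1 * h$1 + g$2 * h$2 = 1 \<and> g$3 * h$3 = 1"
    unfolding inner_expose[OF assms] by argo
  then show "h = g"
    using generator_coords[OF assms(1)] generator_coords[OF assms(2)]
      unit_circle_inner_le_1(2)[of "h$1" "h$2" "g$1" "g$2"]
    by (intro generators_eqI[OF assms(2,1)]) auto
next
  assume "h = g"
  then show "expose g \<bullet> h = 0"
    using generator_coords[OF assms(1)] inner_expose[OF assms(1,1)] by (auto simp: power2_eq_square)
qed

lemma generators_dual_family:
  assumes BG: "B \<subseteq> generators" and "finite B" "card B \<le> 2"
  obtains w where "\<And>p g. p \<in> B \<Longrightarrow> g \<in> generators \<Longrightarrow> 0 \<le> w p \<bullet> g"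
    "\<And>p. p \<in> B \<Longrightarrow> 0 < w p \<bullet> p" "\<And>p q. p \<in> B \<Longrightarrow> q \<in> B \<Longrightarrow> p \<noteq> q \<Longrightarrow> w p \<bullet> q = 0"
proof (cases "card B \<le> 1")
  case True
  have e4: "vector [0, 0, 0, 1] \<bullet> g = 1" if "g \<in> generators" for g
    using generator_coords(3)[OF that] by (simp add: inner_real4)
  have "p = q" if "p \<in> B" "q \<in> B" for p q
    using True \<open>finite B\<close> that by (metis One_nat_def card_le_Suc0_iff_eq)
  then show ?thesis
    using BG e4 by (intro that[of "\<lambda>_. vector [0, 0, 0, 1]"]) auto
next
  case False
  then have "card B = 2" using assms(3) by linarith
  then obtain p q where pq: "B = {p, q}" "p \<noteq> q" by (auto simp: card_2_iff)
  let ?w = "\<lambda>r. expose (if r = p then q else p)"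
  show ?thesis
  proof (rule that[of ?w])
    show "0 \<le> ?w r \<bullet> g" if "r \<in> B" "g \<in> generators" for r g
      using that pq BG expose_nonneg by auto
    show "0 < ?w r \<bullet> r" if "r \<in> B" for r
    proof -
      define r' where "r' = (if r = p then q else p)"
      have "r \<in> generators" "r' \<in> generators" "r \<noteq> r'"
        using that pq BG by (auto simp: r'_def)
      then have "0 \<le> expose r' \<bullet> r" "expose r' \<bullet> r \<noteq> 0"
        using expose_nonneg[of r' r] expose_eq_0_iff[of r' r] by auto
      then show ?thesis by (simp add: r'_def)
    qed
    show "?w r \<bullet> r' = 0" if "r \<in> B" "r' \<in> B" "r \<noteq> r'" for r r'
    proof -
      have "r' = (if r = p then q else p)" using that pq by auto
      then show ?thesis using expose_eq_0_iff[of _ r'] BG that by auto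
    qed
  qed
qed

lemma extension_dim_le_2:
  assumes "Z \<subseteq> generators" "dim Z \<le> 2" "\<And>z. z \<in> Z \<Longrightarrow> 0 \<le> s \<bullet> z"
  shows "\<exists>u. (\<forall>g\<in>generators. 0 \<le> u \<bullet> g) \<and> (\<forall>z\<in>Z. u \<bullet> z = s \<bullet> z)"
proof -
  obtain B where B: "B \<subseteq> Z" "independent B" "Z \<subseteq> span B" "card B = dim Z"
    by (rule basis_exists)
  have "finite B" using B(2) by (rule finiteI_independent)
  moreover have "B \<subseteq> generators" using B(1) assms(1) by blast
  ultimately obtain w where "\<And>p g. p \<in> B \<Longrightarrow> g \<in> generators \<Longrightarrow> 0 \<le> w p \<bullet> g"
    "\<And>p. p \<in> B \<Longrightarrow> 0 < w p \<bullet> p" "\<And>p q. p \<in> B \<Longrightarrow> q \<in> B \<Longrightarrow> p \<noteq> q \<Longrightarrow> w p \<bullet> q = 0"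
    using generators_dual_family assms(2) B(4) by metis
  then obtain u where "\<forall>g\<in>generators. 0 \<le> u \<bullet> g" "\<forall>x\<in>span B. u \<bullet> x = s \<bullet> x"
    using nonneg_extension_dual_family[OF \<open>finite B\<close>, of generators w s] B(1) assms(3) by blast
  then show ?thesis using B(3) by blast
qed

definition contact_set :: "real^4 \<Rightarrow> (real^4) set" where
  "contact_set n = {g \<in> generators. n \<bullet> g = 0}"

definition supporting_functional :: "real^4 \<Rightarrow> bool" where
  "supporting_functional n \<longleftrightarrow> (\<forall>g\<in>generators. 0 \<le> n \<bullet> g) \<and> (\<forall>p q. \<not> contact_set n \<subseteq> {p, q})"

lemma supporting_functional_nonneg: "supporting_functional n \<Longrightarrow> g \<in> generators \<Longrightarrow> 0 \<le> n \<bullet> g"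
  and supporting_functional_contact: "supporting_functional n \<Longrightarrow> \<not> contact_set n \<subseteq> {p, q}"
  by (simp_all add: supporting_functional_def)

lemma supporting_functional_quarter_circle:
  "supporting_functional n \<Longrightarrow> (x, y) \<in> quarter_circle \<Longrightarrow> 0 \<le> n$1 * x + n$2 * y + (n$3 + n$4)"
  and supporting_functional_half_circle:
  "supporting_functional n \<Longrightarrow> (x, y) \<in> half_circle \<Longrightarrow> 0 \<le> n$1 * x + n$2 * y + (n$4 - n$3)"
  using supporting_functional_nonneg[OF _ top4_in_generators] supporting_functional_nonneg[OF _ bot4_in_generators]
  by (simp_all add: inner_top4 inner_bot4)

lemma top_contact_endpoint:
  assumes n: "supporting_functional n" and "n$1 \<noteq> 0 \<or> n$2 \<noteq> 0" "(x, y) \<in> quarter_circle" "n \<bullet> top4 x y = 0"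
  shows "x = 0 \<or> y = 0"
proof (rule ccontr)
  assume "\<not> (x = 0 \<or> y = 0)"
  then have "0 < x" "0 < y" using assms(3) by (auto simp: quarter_circle_def)
  note zero = quarter_circle_interior_zero[OF supporting_functional_quarter_circle[OF n] supporting_functional_half_circle[OF n] assms(2,3) this]
  have "contact_set n \<subseteq> {top4 x y, bot4 x y}"
  proof
    fix h assume "h \<in> contact_set n"
    then have h: "h \<in> generators" "n \<bullet> h = 0" by (auto simp: contact_set_def)
    from h(1) show "h \<in> {top4 x y, bot4 x y}"
      by (cases rule: generators_cases) (use h(2) zero assms(4) in \<open>auto simp: inner_top4 inner_bot4\<close>)
  qed
  then show False using supporting_functional_contact[OF n] by blast
qed

lemma bottom_contact_endpoint:
  assumes n: "supporting_functional n" and "n$1 \<noteq> 0 \<or> n$2 \<noteq> 0" "(x, y) \<in> half_circle" "n \<bullet> bot4 x y = 0"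
  shows "y = 0"
proof (rule ccontr)
  assume "y \<noteq> 0"
  then have "0 < y" using assms(3) by (auto simp: half_circle_def)
  note zero = half_circle_interior_zero[OF supporting_functional_quarter_circle[OF n] supporting_functional_half_circle[OF n] assms(2,3) this]
  obtain w where w: "\<And>x' y'. (x', y') \<in> quarter_circle \<Longrightarrow> n \<bullet> top4 x' y' = 0 \<Longrightarrow> (x', y') = w"
    using zero(2) assms(4) by (auto simp: inner_top4 inner_bot4)
  have "contact_set n \<subseteq> {top4 (fst w) (snd w), bot4 x y}"
  proof
    fix h assume "h \<in> contact_set n"
    then have h: "h \<in> generators" "n \<bullet> h = 0" by (auto simp: contact_set_def)
    from h(1) show "h \<in> {top4 (fst w) (snd w), bot4 x y}"
    proof (cases rule: generators_cases)
      case (1 x' y')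
      then show ?thesis using w[of x' y'] h(2) by auto
    next
      case (2 x' y')
      then show ?thesis using zero(1)[of x' y'] h(2) assms(4) by (simp add: inner_bot4)
    qed
  qed
  then show False using supporting_functional_contact[OF n] by blast
qed

lemma contact_set_endpoints:
  assumes n: "supporting_functional n" and "n$1 \<noteq> 0 \<or> n$2 \<noteq> 0"
  shows "contact_set n \<subseteq> {top4 1 0, top4 0 1, bot4 1 0, bot4 (-1) 0}"
proof
  fix g assume "g \<in> contact_set n"
  then have g: "g \<in> generators" "n \<bullet> g = 0" by (auto simp: contact_set_def)
  from g(1) show "g \<in> {top4 1 0, top4 0 1, bot4 1 0, bot4 (-1) 0}"
  proof (cases rule: generators_cases)
    case (1 x y)
    then have "x = 0 \<or> y = 0" using top_contact_endpoint[OF n assms(2)] g(2) by simp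
    then show ?thesis using 1 by (auto simp: quarter_circle_def power2_eq_1_iff)
  next
    case (2 x y)
    then have "y = 0" using bottom_contact_endpoint[OF n assms(2)] g(2) by simp
    then show ?thesis using 2 by (auto simp: half_circle_def power2_eq_1_iff)
  qed
qed

lemma constant_cases:
  assumes n: "supporting_functional n" and "n$1 = 0" "n$2 = 0" "\<not> generators \<subseteq> contact_set n"
  shows "(n$3 + n$4 = 0 \<and> 0 < n$4 - n$3) \<or> (n$4 - n$3 = 0 \<and> 0 < n$3 + n$4)"
proof -
  have "(1, 0) \<in> quarter_circle" "(1, 0) \<in> half_circle"
    by (simp_all add: quarter_circle_def half_circle_def)
  then have "0 \<le> n$3 + n$4" "0 \<le> n$4 - n$3"
    using supporting_functional_quarter_circle[OF n] supporting_functional_half_circle[OF n] assms(2,3) by force+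
  moreover have "\<not> (0 < n$3 + n$4 \<and> 0 < n$4 - n$3)"
  proof
    assume "0 < n$3 + n$4 \<and> 0 < n$4 - n$3"
    then have "contact_set n \<subseteq> {0, 0}"
      using assms(2,3) by (auto simp: contact_set_def inner_top4 inner_bot4 elim!: generators_cases)
    then show False using supporting_functional_contact[OF n] by blast
  qed
  moreover have "\<not> (n$3 + n$4 = 0 \<and> n$4 - n$3 = 0)"
    using assms
    by (auto simp: contact_set_def inner_top4 inner_bot4 top4_in_generators bot4_in_generators
        elim!: generators_cases)
  ultimately show ?thesis by linarith
qed

lemma coefficient_cases:
  assumes n: "supporting_functional n" and "\<not> generators \<subseteq> contact_set n"
  shows "(n$1 = 0 \<and> n$2 = 0 \<and> n$3 + n$4 = 0 \<and> 0 < n$4 - n$3)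
       \<or> (n$1 = 0 \<and> n$2 = 0 \<and> n$4 - n$3 = 0 \<and> 0 < n$3 + n$4)
       \<or> (n$1 = 0 \<and> n$3 = 0 \<and> n$4 = 0 \<and> 0 < n$2)
       \<or> (n$2 = n$1 \<and> n$3 = - n$1 \<and> n$4 = 0 \<and> 0 < n$1)"
proof (cases "n$1 = 0 \<and> n$2 = 0")
  case True
  then show ?thesis using constant_cases[OF n] assms(2) by blast
next
  case False
  have "top4 1 0 \<in> generators" "top4 0 1 \<in> generators" "bot4 1 0 \<in> generators" "bot4 (-1) 0 \<in> generators"
    by (simp_all add: top4_in_generators bot4_in_generators quarter_circle_def half_circle_def)
  then have contact:
    "top4 1 0 \<in> contact_set n \<longleftrightarrow> n$1 + n$3 + n$4 = 0"
    "top4 0 1 \<in> contact_set n \<longleftrightarrow> n$2 + n$3 + n$4 = 0"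
    "bot4 1 0 \<in> contact_set n \<longleftrightarrow> n$1 + n$4 - n$3 = 0"
    "bot4 (-1) 0 \<in> contact_set n \<longleftrightarrow> - n$1 + n$4 - n$3 = 0"
    by (auto simp: contact_set_def inner_top4 inner_bot4 algebra_simps)
  have three: "(top4 1 0 \<in> contact_set n \<and> top4 0 1 \<in> contact_set n \<and> bot4 1 0 \<in> contact_set n)
    \<or> (top4 1 0 \<in> contact_set n \<and> top4 0 1 \<in> contact_set n \<and> bot4 (-1) 0 \<in> contact_set n)
    \<or> (top4 1 0 \<in> contact_set n \<and> bot4 1 0 \<in> contact_set n \<and> bot4 (-1) 0 \<in> contact_set n)
    \<or> (top4 0 1 \<in> contact_set n \<and> bot4 1 0 \<in> contact_set n \<and> bot4 (-1) 0 \<in> contact_set n)"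
    using contact_set_endpoints[OF n] False supporting_functional_contact[OF n, of "top4 1 0" "top4 0 1"]
      supporting_functional_contact[OF n, of "top4 1 0" "bot4 1 0"] supporting_functional_contact[OF n, of "top4 1 0" "bot4 (-1) 0"]
      supporting_functional_contact[OF n, of "top4 0 1" "bot4 1 0"] supporting_functional_contact[OF n, of "top4 0 1" "bot4 (-1) 0"]
      supporting_functional_contact[OF n, of "bot4 1 0" "bot4 (-1) 0"]
    by blast
  have "(3/5, 4/5) \<in> quarter_circle" "(0, 1) \<in> quarter_circle" "(1, 0) \<in> quarter_circle"
    "(1, 0) \<in> half_circle" "(-1, 0) \<in> half_circle" "(0, 1) \<in> half_circle"
    by (simp_all add: quarter_circle_def half_circle_def power2_eq_square)
  then have "0 \<le> n$1 * (3/5) + n$2 * (4/5) + (n$3 + n$4)" "0 \<le> n$2 + (n$3 + n$4)"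
    "0 \<le> n$1 + (n$3 + n$4)" "0 \<le> n$1 + (n$4 - n$3)" "0 \<le> - n$1 + (n$4 - n$3)"
    "0 \<le> n$2 + (n$4 - n$3)"
    using supporting_functional_quarter_circle[OF n] supporting_functional_half_circle[OF n] by force+
  then show ?thesis using three False unfolding contact by argo
qed

lemma endpoint_functionals_nonneg:
  assumes "g \<in> generators"
  shows "0 \<le> vector [0, 0, 1, 1] \<bullet> g" "0 \<le> vector [1, 1, -1, 0] \<bullet> g" "0 \<le> vector [-1, 0, 0, 1] \<bullet> g"
    "0 \<le> vector [2, 0, -1, 1] \<bullet> g" "0 \<le> vector [0, 1, 0, 0] \<bullet> g" "0 \<le> vector [0, 0, -1, 1] \<bullet> g"
proof -
  have "\<bar>g$1\<bar> \<le> 1" "0 \<le> g$2" "g$4 = 1" "g$3 = 1 \<and> 0 \<le> g$1 \<and> 1 \<le> g$1 + g$2 \<or> g$3 = -1"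
    using assms
    by (auto elim!: generators_cases dest: quarter_circle_sum_ge_1
        simp: quarter_circle_def half_circle_def top4_def bot4_def intro: unit_circle_abs_le_1)
  then show "0 \<le> vector [0, 0, 1, 1] \<bullet> g" "0 \<le> vector [1, 1, -1, 0] \<bullet> g" "0 \<le> vector [-1, 0, 0, 1] \<bullet> g"
    "0 \<le> vector [2, 0, -1, 1] \<bullet> g" "0 \<le> vector [0, 1, 0, 0] \<bullet> g" "0 \<le> vector [0, 0, -1, 1] \<bullet> g"
    by (auto simp: inner_real4 abs_le_iff)
qed

lemma contact_set_ends:
  assumes "m$1 = 0" "m$3 = 0" "m$4 = 0" "0 < m$2"
  shows "contact_set m = {top4 1 0, bot4 1 0, bot4 (-1) 0}"
proof
  show "{top4 1 0, bot4 1 0, bot4 (-1) 0} \<subseteq> contact_set m"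
    using assms by (simp add: contact_set_def top4_in_generators bot4_in_generators
        quarter_circle_def half_circle_def inner_top4 inner_bot4)
  show "contact_set m \<subseteq> {top4 1 0, bot4 1 0, bot4 (-1) 0}"
    using assms
    by (auto elim!: generators_cases simp: contact_set_def inner_top4 inner_bot4 quarter_circle_def
        half_circle_def power2_eq_1_iff)
qed

lemma contact_set_corner:
  assumes "m$2 = m$1" "m$3 = - m$1" "m$4 = 0" "0 < m$1"
  shows "contact_set m = {top4 1 0, top4 0 1, bot4 (-1) 0}"
proof
  show "{top4 1 0, top4 0 1, bot4 (-1) 0} \<subseteq> contact_set m"
    using assms by (simp add: contact_set_def top4_in_generators bot4_in_generators
        quarter_circle_def half_circle_def inner_top4 inner_bot4)
  show "contact_set m \<subseteq> {top4 1 0, top4 0 1, bot4 (-1) 0}"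
  proof
    fix z assume "z \<in> contact_set m"
    then have "z \<in> generators" "m \<bullet> z = 0" by (auto simp: contact_set_def)
    from this(1) show "z \<in> {top4 1 0, top4 0 1, bot4 (-1) 0}"
    proof (cases rule: generators_cases)
      case (1 x y)
      have "m$1 * (x + y - 1) = 0" using \<open>m \<bullet> z = 0\<close> 1(2) assms by (simp add: inner_top4 algebra_simps)
      then have "x + y = 1" using assms(4) by simp
      moreover have "x\<^sup>2 + y\<^sup>2 = 1" using 1(1) by (simp add: quarter_circle_def)
      moreover have "(x + y)\<^sup>2 = x\<^sup>2 + y\<^sup>2 + 2 * x * y" by (rule power2_sum)
      ultimately have "x * y = 0" by simp
      then show ?thesis using 1 \<open>x + y = 1\<close> by auto
    next
      case (2 x y)
      have "m$1 * (x + y + 1) = 0" using \<open>m \<bullet> z = 0\<close> 2(2) assms by (simp add: inner_bot4 algebra_simps)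
      then have "x + y = -1" using assms(4) by simp
      moreover have "\<bar>x\<bar> \<le> 1" "0 \<le> y"
        using 2(1) unit_circle_abs_le_1[of x y] by (auto simp: half_circle_def)
      ultimately have "x = -1" "y = 0" by (auto simp: abs_le_iff)
      then show ?thesis using 2 by simp
    qed
  qed
qed

text \<open>When the contact set consists of three endpoints, each of them is exposed within the contact
  set by a functional that is nonnegative on all generators.\<close>

lemma extension_ends:
  assumes "\<And>z. z \<in> {top4 1 0, bot4 1 0, bot4 (-1) 0} \<Longrightarrow> 0 \<le> s \<bullet> z"
  shows "\<exists>u. (\<forall>g\<in>generators. 0 \<le> u \<bullet> g) \<and> (\<forall>x\<in>span {top4 1 0, bot4 1 0, bot4 (-1) 0}. u \<bullet> x = s \<bullet> x)"
proof -
  define w :: "real^4 \<Rightarrow> real^4" where "w p = (if p = top4 1 0 then vector [0, 0, 1, 1]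
      else if p = bot4 1 0 then vector [1, 1, -1, 0] else vector [-1, 0, 0, 1])" for p
  have w_nonneg: "0 \<le> w p \<bullet> g" if "p \<in> {top4 1 0, bot4 1 0, bot4 (-1) 0}" "g \<in> generators" for p g
    using endpoint_functionals_nonneg[OF that(2)] by (simp add: w_def)
  have w_pos: "0 < w p \<bullet> p" if "p \<in> {top4 1 0, bot4 1 0, bot4 (-1) 0}" for p
    using that by (auto simp: w_def top4_def bot4_def inner_real4 vec4_eq_iff)
  have w_zero: "w p \<bullet> q = 0" if "p \<in> {top4 1 0, bot4 1 0, bot4 (-1) 0}" "q \<in> {top4 1 0, bot4 1 0, bot4 (-1) 0}" "p \<noteq> q" for p q
    using that by (auto simp: w_def top4_def bot4_def inner_real4 vec4_eq_iff)
  have "finite {top4 1 0, bot4 1 0, bot4 (-1) 0}" by simp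
  from nonneg_extension_dual_family[OF this w_nonneg w_pos w_zero assms] show ?thesis .
qed

lemma extension_corner:
  assumes "\<And>z. z \<in> {top4 1 0, top4 0 1, bot4 (-1) 0} \<Longrightarrow> 0 \<le> s \<bullet> z"
  shows "\<exists>u. (\<forall>g\<in>generators. 0 \<le> u \<bullet> g) \<and> (\<forall>x\<in>span {top4 1 0, top4 0 1, bot4 (-1) 0}. u \<bullet> x = s \<bullet> x)"
proof -
  define w :: "real^4 \<Rightarrow> real^4" where "w p = (if p = top4 1 0 then vector [2, 0, -1, 1]
      else if p = top4 0 1 then vector [0, 1, 0, 0] else vector [0, 0, -1, 1])" for p
  have w_nonneg: "0 \<le> w p \<bullet> g" if "p \<in> {top4 1 0, top4 0 1, bot4 (-1) 0}" "g \<in> generators" for p g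
    using endpoint_functionals_nonneg[OF that(2)] by (simp add: w_def)
  have w_pos: "0 < w p \<bullet> p" if "p \<in> {top4 1 0, top4 0 1, bot4 (-1) 0}" for p
    using that by (auto simp: w_def top4_def bot4_def inner_real4 vec4_eq_iff)
  have w_zero: "w p \<bullet> q = 0" if "p \<in> {top4 1 0, top4 0 1, bot4 (-1) 0}" "q \<in> {top4 1 0, top4 0 1, bot4 (-1) 0}" "p \<noteq> q" for p q
    using that by (auto simp: w_def top4_def bot4_def inner_real4 vec4_eq_iff)
  have "finite {top4 1 0, top4 0 1, bot4 (-1) 0}" by simp
  from nonneg_extension_dual_family[OF this w_nonneg w_pos w_zero assms] show ?thesis .
qed

lemma extension_gap:
  assumes "0 < d" "\<And>g. g \<in> generators \<Longrightarrow> m \<bullet> g = 0 \<or> d \<le> m \<bullet> g"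
    and s_nonneg: "\<And>z. z \<in> contact_set m \<Longrightarrow> 0 \<le> s \<bullet> z"
  shows "\<exists>u. (\<forall>g\<in>generators. 0 \<le> u \<bullet> g) \<and> (\<forall>z\<in>contact_set m. u \<bullet> z = s \<bullet> z)"
proof -
  have "\<exists>u. (\<forall>g\<in>generators. 0 \<le> u \<bullet> g) \<and> (\<forall>x. m \<bullet> x = 0 \<longrightarrow> u \<bullet> x = s \<bullet> x)"
  proof (rule nonneg_extension_gap[of generators m d "\<bar>s$1\<bar> + \<bar>s$2\<bar> + \<bar>s$3\<bar> + \<bar>s$4\<bar>" s])
    show "\<And>g. g \<in> generators \<Longrightarrow> m \<bullet> g = 0 \<Longrightarrow> 0 \<le> s \<bullet> g"
      using s_nonneg by (simp add: contact_set_def)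
  qed (use assms(1,2) inner_generator_bounded in auto)
  then show ?thesis by (auto simp: contact_set_def)
qed

lemma extension_hyperplane:
  assumes nonneg: "\<And>g. g \<in> generators \<Longrightarrow> 0 \<le> m \<bullet> g"
    and Z: "Z = contact_set m" "dim Z = 3" "\<not> generators \<subseteq> Z"
    and s_nonneg: "\<And>z. z \<in> Z \<Longrightarrow> 0 \<le> s \<bullet> z"
  shows "\<exists>u. (\<forall>g\<in>generators. 0 \<le> u \<bullet> g) \<and> (\<forall>z\<in>Z. u \<bullet> z = s \<bullet> z)"
proof -
  have big: "\<not> contact_set m \<subseteq> {p, q}" for p q
  proof
    assume "contact_set m \<subseteq> {p, q}"
    then have "dim Z \<le> card {p, q}" using Z(1) by (intro dim_le_card) (auto intro: span_base)
    also have "\<dots> \<le> 2" by (simp add: card_insert_le_m1)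
    finally show False using Z(2) by simp
  qed
  have "supporting_functional m" using nonneg big by (simp add: supporting_functional_def)
  from coefficient_cases[OF this] Z(1,3)
  consider (top) "m$1 = 0 \<and> m$2 = 0 \<and> m$3 + m$4 = 0 \<and> 0 < m$4 - m$3"
    | (bottom) "m$1 = 0 \<and> m$2 = 0 \<and> m$4 - m$3 = 0 \<and> 0 < m$3 + m$4"
    | (ends) "m$1 = 0 \<and> m$3 = 0 \<and> m$4 = 0 \<and> 0 < m$2"
    | (corner) "m$2 = m$1 \<and> m$3 = - m$1 \<and> m$4 = 0 \<and> 0 < m$1"
    by blast
  then show ?thesis
  proof cases
    case top
    show ?thesis
    proof (rule extension_gap[of "m$4 - m$3" m s, folded Z(1), OF _ _ s_nonneg])
      show "m \<bullet> g = 0 \<or> m$4 - m$3 \<le> m \<bullet> g" if "g \<in> generators" for g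
        using that top by (auto elim!: generators_cases simp: inner_top4 inner_bot4)
    qed (use top in simp)
  next
    case bottom
    show ?thesis
    proof (rule extension_gap[of "m$3 + m$4" m s, folded Z(1), OF _ _ s_nonneg])
      show "m \<bullet> g = 0 \<or> m$3 + m$4 \<le> m \<bullet> g" if "g \<in> generators" for g
        using that bottom by (auto elim!: generators_cases simp: inner_top4 inner_bot4)
    qed (use bottom in simp)
  next
    case ends
    then have "Z = {top4 1 0, bot4 1 0, bot4 (-1) 0}" using Z(1) contact_set_ends by simp
    then obtain u where "\<forall>g\<in>generators. 0 \<le> u \<bullet> g" "\<forall>x\<in>span Z. u \<bullet> x = s \<bullet> x"
      using extension_ends[of s] s_nonneg by auto
    then show ?thesis by (meson span_base)
  next
    case corner
    then have "Z = {top4 1 0, top4 0 1, bot4 (-1) 0}" using Z(1) contact_set_corner by simp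
    then obtain u where "\<forall>g\<in>generators. 0 \<le> u \<bullet> g" "\<forall>x\<in>span Z. u \<bullet> x = s \<bullet> x"
      using extension_corner[of s] s_nonneg by auto
    then show ?thesis by (meson span_base)
  qed
qed

lemma generators_extension:
  assumes Z: "Z \<subseteq> generators" "\<not> generators \<subseteq> Z"
    and split: "\<And>a b \<alpha> \<beta>. a \<in> generators \<Longrightarrow> b \<in> generators \<Longrightarrow> 0 < \<alpha> \<Longrightarrow> 0 \<le> \<beta>
                  \<Longrightarrow> \<alpha> *\<^sub>R a + \<beta> *\<^sub>R b \<in> span Z \<Longrightarrow> a \<in> Z"
    and s_nonneg: "\<And>z. z \<in> Z \<Longrightarrow> 0 \<le> s \<bullet> z"
  shows "\<exists>u. (\<forall>g\<in>generators. 0 \<le> u \<bullet> g) \<and> (\<forall>z\<in>Z. u \<bullet> z = s \<bullet> z)"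
proof -
  have in_span: "g \<in> Z" if "g \<in> generators" "g \<in> span Z" for g
    using split[of g g 1 0] that by simp
  have "dim Z \<le> 4" using dim_subset_UNIV[of Z] by simp
  then consider "dim Z \<le> 2" | "dim Z = 3" | "dim Z = 4" by linarith
  then show ?thesis
  proof cases
    case 1
    then show ?thesis using extension_dim_le_2[OF Z(1) _ s_nonneg] by blast
  next
    case 2
    then have "dim Z = DIM(real^4) - 1" by simp
    then obtain n :: "real^4" where n: "n \<noteq> 0" "span Z = {x. n \<bullet> x = 0}"
      by (rule lowdim_eq_hyperplane)
    obtain m where m: "\<And>g. g \<in> generators \<Longrightarrow> 0 \<le> m \<bullet> g" "span Z = {x. m \<bullet> x = 0}"
      using span_hyperplane_supporting[of generators Z n] split n(2) by blast
    have "Z = contact_set m"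
      using in_span Z(1) m(2) span_base by (fastforce simp: contact_set_def)
    then show ?thesis using extension_hyperplane[OF m(1) _ 2 Z(2) s_nonneg] by blast
  next
    case 3
    then have "dim Z = DIM(real^4)" by simp
    then have "span Z = UNIV" by (simp only: dim_eq_full)
    then show ?thesis using Z(2) in_span by blast
  qed
qed

theorem exK_facially_dual_complete: "facially_dual_complete exK"
  unfolding facially_dual_complete_def
proof (intro allI impI)
  let ?K = "convex_cone hull generators"
  fix F assume "pface F exK \<and> F \<noteq> {} \<and> F \<noteq> exK"
  then have F: "F face_of ?K" "F \<noteq> {}" "F \<noteq> ?K"
    by (auto simp: pface_def exK_eq_convex_cone_hull)
  have "convex_cone hull (generators \<inter> F) \<subseteq> span (generators \<inter> F)"
    by (simp add: convex_cone_span hull_minimal span_superset)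
  then have F_span: "F \<subseteq> span (generators \<inter> F)"
    using face_of_convex_cone_hull[OF F(1,2)] by blast
  show "closed {u + v | u v. u \<in> dual_cone exK \<and> v \<in> perp F}"
  proof (rule closed_dual_cone_plus_perp)
    show "F \<subseteq> exK" using F(1) face_of_imp_subset exK_eq_convex_cone_hull by blast
    fix s assume "s \<in> dual_cone F"
    then have "\<And>z. z \<in> generators \<inter> F \<Longrightarrow> 0 \<le> s \<bullet> z" by (auto simp: dual_cone_def)
    then obtain u where u: "\<forall>g\<in>generators. 0 \<le> u \<bullet> g" "\<forall>z\<in>generators \<inter> F. u \<bullet> z = s \<bullet> z"
      using generators_extension[of "generators \<inter> F" s] face_of_convex_cone_hull_proper[OF F]
        face_of_convex_cone_hull_generator[OF F(1,2)] by blast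
    have "u \<in> dual_cone exK"
      using u(1) convex_cone_hull_nonneg[of generators u]
      by (auto simp: dual_cone_def exK_eq_convex_cone_hull)
    moreover have "\<forall>x\<in>F. u \<bullet> x = s \<bullet> x" using u(2) F_span inner_eq_on_span by blast
    ultimately show "\<exists>u\<in>dual_cone exK. \<forall>x\<in>F. u \<bullet> x = s \<bullet> x" by blast
  qed
qed

section \<open>The tangent cone of C at xbar\<close>

lemma top3_in_exC: "(x, y) \<in> quarter_circle \<Longrightarrow> top3 x y \<in> exC"
  and bot3_in_exC: "(x, y) \<in> half_circle \<Longrightarrow> bot3 x y \<in> exC"
  unfolding exC_def curve_eq by (auto intro: hull_inc)

lemma xbar_eq: "xbar = top3 0 1"
  by (simp add: xbar_def top3_def)

lemma xbar_in_exC: "xbar \<in> exC"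
  unfolding xbar_eq by (rule top3_in_exC) (simp add: quarter_circle_def)

lemma exC_second_le_1: "p \<in> exC \<Longrightarrow> vector [0, 1, 0] \<bullet> p \<le> 1"
  by (rule exC_le) (auto simp: quarter_circle_def half_circle_def top3_def bot3_def inner_real3
      dest: unit_circle_abs_le_1)

text \<open>As \<epsilon> tends to 0 these valid inequalities, all tight at xbar, force the tangent directions
  along the top circle to point into d1 \<ge> 0; the bound for the bottom circle is AM-GM.\<close>

lemma exC_le_eps:
  assumes "0 < \<epsilon>" "p \<in> exC"
  shows "vector [-1, 1/(2*\<epsilon>), \<epsilon>/2] \<bullet> p \<le> \<epsilon>/2 + 1/(2*\<epsilon>)"
  using assms(2)
proof (rule exC_le[rotated 2])
  fix x y assume "(x, y) \<in> quarter_circle"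
  then have "0 \<le> x" "y \<le> 1" using unit_circle_abs_le_1[of x y] by (auto simp: quarter_circle_def)
  moreover have "y / (2*\<epsilon>) \<le> 1 / (2*\<epsilon>)" using \<open>y \<le> 1\<close> assms(1) by (simp add: divide_right_mono)
  ultimately show "vector [-1, 1/(2*\<epsilon>), \<epsilon>/2] \<bullet> top3 x y \<le> \<epsilon>/2 + 1/(2*\<epsilon>)"
    by (simp add: top3_def inner_real3)
next
  fix x y assume "(x, y) \<in> half_circle"
  then have u: "x\<^sup>2 + y\<^sup>2 = 1" by (simp add: half_circle_def)
  have "x\<^sup>2 = (1 - y) * (1 + y)" using u by (simp add: algebra_simps power2_eq_square)
  also have "\<dots> \<le> (1 - y) * 2" using unit_circle_abs_le_1(2)[OF u] by (intro mult_left_mono) auto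
  finally have "x\<^sup>2 \<le> 2 * (1 - y)" by simp
  moreover have "0 \<le> (2 * \<epsilon> + x)\<^sup>2" by simp
  then have "- (4 * \<epsilon> * x) \<le> 4 * \<epsilon>\<^sup>2 + x\<^sup>2" by (simp add: power2_eq_square algebra_simps)
  ultimately have "(- x) * (2 * \<epsilon>) \<le> \<epsilon> * (2 * \<epsilon>) + (1 - y)"
    by (simp add: power2_eq_square algebra_simps)
  also have "\<dots> = (\<epsilon> + (1 - y) / (2 * \<epsilon>)) * (2 * \<epsilon>)"
    using assms(1) by (simp add: distrib_right)
  finally have "- x \<le> \<epsilon> + (1 - y) / (2 * \<epsilon>)" using assms(1) by (simp only: mult_le_cancel_right_pos)
  then show "vector [-1, 1/(2*\<epsilon>), \<epsilon>/2] \<bullet> bot3 x y \<le> \<epsilon>/2 + 1/(2*\<epsilon>)"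
    by (simp add: bot3_def inner_real3 diff_divide_distrib)
qed

lemma xbar_tight: "vector [0, 1, 0] \<bullet> xbar = 1" "vector [-1, 1/(2*\<epsilon>), \<epsilon>/2] \<bullet> xbar = \<epsilon>/2 + 1/(2*\<epsilon>)"
  by (simp_all add: xbar_def inner_real3)

lemma tcone_xbar_second_le_0: "d \<in> tcone xbar exC \<Longrightarrow> d$2 \<le> 0"
  using tcone_halfspace[OF exC_second_le_1 xbar_tight(1)] by (simp add: inner_real3)

lemma tcone_xbar_first_nonneg:
  assumes "d \<in> tcone xbar exC" "d$2 = 0"
  shows "0 \<le> d$1"
proof -
  have "- d$1 \<le> \<epsilon> * (- d$3 / 2)" if "0 < \<epsilon>" for \<epsilon>
    using tcone_halfspace[OF exC_le_eps[OF that] xbar_tight(2) assms(1)] assms(2)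
    by (simp add: inner_real3)
  then have "- d$1 \<le> 0" by (intro le_zero_if_le_small_multiples[of 1 _ "- d$3 / 2"]) auto
  then show ?thesis by simp
qed

lemma xbar_step: "xbar + e *\<^sub>R vector [a1, a2, a3] = vector [e * a1, 1 + e * a2, 1 + e * a3]"
  by (simp add: xbar_def vec3_eq_iff)

lemma tcone_xbar_points:
  "0 \<in> tcone xbar exC" "vector [0, 0, -1] \<in> tcone xbar exC" "vector [1, -1, 0] \<in> tcone xbar exC"
proof -
  show "0 \<in> tcone xbar exC" using feasible_dir_in_tcone[of 1 xbar 0] xbar_in_exC by simp
  have "xbar + 2 *\<^sub>R vector [0, 0, -1] = bot3 0 1" "(0, 1) \<in> half_circle"
    by (simp_all add: xbar_step bot3_def half_circle_def)
  then show "vector [0, 0, -1] \<in> tcone xbar exC"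
    by (intro feasible_dir_in_tcone[of 2]) (auto intro: bot3_in_exC)
  have "xbar + 1 *\<^sub>R vector [1, -1, 0] = top3 1 0" "(1, 0) \<in> quarter_circle"
    by (simp_all add: xbar_def top3_def vec3_eq_iff quarter_circle_def)
  then show "vector [1, -1, 0] \<in> tcone xbar exC"
    by (intro feasible_dir_in_tcone[of 1]) (auto intro: top3_in_exC)
qed

text \<open>Tangent directions at xbar towards the points of the bottom circle near (0, 1).\<close>

lemma tcone_xbar_bottom:
  fixes u :: real
  assumes "0 \<le> u" "u \<le> 1" "\<sigma> = 1 \<or> \<sigma> = -1"
  shows "vector [\<sigma> * (u / (1 + u\<^sup>2)), - (u / (1 + u\<^sup>2)) * u, -1] \<in> tcone xbar exC"
proof -
  have D: "1 + u\<^sup>2 \<noteq> 0" using one_plus_square_pos[of u] by simp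
  let ?X = "2 * u / (1 + u\<^sup>2)" and ?Y = "(1 - u\<^sup>2) / (1 + u\<^sup>2)"
  have "1 - 2 * (u / (1 + u\<^sup>2) * u) = ?Y" using D by (simp add: field_simps power2_eq_square)
  then have "xbar + 2 *\<^sub>R vector [\<sigma> * (u / (1 + u\<^sup>2)), - (u / (1 + u\<^sup>2)) * u, -1] = bot3 (\<sigma> * ?X) ?Y"
    by (simp add: xbar_step bot3_def vec3_eq_iff)
  moreover have "(\<sigma> * ?X, ?Y) \<in> half_circle"
    using rational_circle_arcs(2,3)[OF assms(1,2)] assms(3) by auto
  ultimately show ?thesis by (intro feasible_dir_in_tcone[of 2]) (auto intro: bot3_in_exC)
qed

lemma tcone_xbar_first_unit: "vector [1, 0, 0] \<in> tcone xbar exC"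
proof (rule closed_contains_ray_limit[OF closed_tcone, where w = "vector [0, -1, 0]"])
  fix u :: real assume u: "0 < u" "u \<le> 1"
  have D: "0 < 1 + u\<^sup>2" by (rule one_plus_square_pos)
  let ?X = "2 * u / (1 + u\<^sup>2)" and ?Y = "(1 - u\<^sup>2) / (1 + u\<^sup>2)"
  have "1 + 2 * u / (1 + u\<^sup>2) * - u = ?Y" using D by (simp add: field_simps power2_eq_square)
  then have "xbar + ?X *\<^sub>R (vector [1, 0, 0] + u *\<^sub>R vector [0, -1, 0]) = top3 ?X ?Y"
    by (simp add: xbar_def top3_def vec3_eq_iff)
  moreover have "top3 ?X ?Y \<in> exC" using rational_circle_arcs(1) u by (simp add: top3_in_exC)
  moreover have "0 < ?X" using u D by simp
  ultimately show "vector [1, 0, 0] + u *\<^sub>R vector [0, -1, 0] \<in> tcone xbar exC"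
    by (intro feasible_dir_in_tcone[of ?X]) auto
qed

lemma convex_tcone_xbar: "convex (tcone xbar exC)"
  by (rule convex_tcone[OF _ xbar_in_exC]) (simp add: exC_def)

lemma tcone_xbar_ray_face:
  "{d \<in> tcone xbar exC. d$2 = 0 \<and> d$1 = 0} face_of tcone xbar exC"
  "closed {d \<in> tcone xbar exC. d$2 = 0 \<and> d$1 = 0}"
proof -
  let ?T = "tcone xbar exC" and ?G = "tcone xbar exC \<inter> {d. vector [0, 1, 0] \<bullet> d = 0}"
  have eq: "{d \<in> ?T. d$2 = 0 \<and> d$1 = 0} = ?G \<inter> {d. vector [-1, 0, 0] \<bullet> d = 0}"
    by (auto simp: inner_real3)
  have G: "?G face_of ?T"
    using tcone_xbar_second_le_0
    by (intro face_of_Int_supporting_hyperplane_le[OF convex_tcone_xbar]) (simp add: inner_real3)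
  have "?G \<inter> {d. vector [-1, 0, 0] \<bullet> d = 0} face_of ?G"
  proof (rule face_of_Int_supporting_hyperplane_le)
    show "convex ?G" using convex_tcone_xbar by (simp add: convex_Int convex_hyperplane)
    show "vector [-1, 0, 0] \<bullet> d \<le> 0" if "d \<in> ?G" for d
      using tcone_xbar_first_nonneg that by (simp add: inner_real3)
  qed
  then show "{d \<in> ?T. d$2 = 0 \<and> d$1 = 0} face_of ?T" unfolding eq using G by (rule face_of_trans)
  show "closed {d \<in> ?T. d$2 = 0 \<and> d$1 = 0}" unfolding eq
    by (intro closed_Int closed_tcone closed_hyperplane)
qed

text \<open>The tangent directions towards the bottom circle squeeze the first coefficient of a functional
  supporting T at the origin.\<close>

lemma tcone_xbar_supporting_first_coeff:
  assumes "tcone xbar exC \<subseteq> {x. a \<bullet> x \<le> 0}" "a$3 = 0"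
  shows "a$1 = 0"
proof -
  have "\<bar>a$1\<bar> \<le> u * a$2" if "0 < u" "u \<le> 1" for u
  proof -
    have le: "a \<bullet> vector [\<sigma> * (u / (1 + u\<^sup>2)), - (u / (1 + u\<^sup>2)) * u, -1] \<le> 0"
      if "\<sigma> = 1 \<or> \<sigma> = -1" for \<sigma>
      using tcone_xbar_bottom[of u \<sigma>] \<open>0 < u\<close> \<open>u \<le> 1\<close> that assms(1) by auto
    from le[of 1] le[of "-1"]
    have "(u / (1 + u\<^sup>2)) * a$1 \<le> (u / (1 + u\<^sup>2)) * (u * a$2)"
      "(u / (1 + u\<^sup>2)) * (- a$1) \<le> (u / (1 + u\<^sup>2)) * (u * a$2)"
      using assms(2) by (simp_all add: inner_real3 algebra_simps)
    moreover have "0 < u / (1 + u\<^sup>2)" using \<open>0 < u\<close> by (simp add: add_pos_nonneg)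
    ultimately have "a$1 \<le> u * a$2" "- a$1 \<le> u * a$2" by (simp_all only: mult_le_cancel_left_pos)
    then show ?thesis by (simp add: abs_le_iff)
  qed
  then have "\<bar>a$1\<bar> \<le> 0" by (rule le_zero_if_le_small_multiples[OF zero_less_one])
  then show ?thesis by simp
qed

text \<open>The ray through (0, 0, -1) is a face of T; a hyperplane exposing it would have to contain
  (1, 0, 0) \<in> T as well.\<close>

theorem tcone_xbar_not_facially_exposed: "\<not> facially_exposed (tcone xbar exC)"
proof
  let ?T = "tcone xbar exC"
  define F where "F = {d \<in> ?T. d$2 = 0 \<and> d$1 = 0}"
  assume "facially_exposed ?T"
  moreover have "pface F ?T" using tcone_xbar_ray_face by (simp add: pface_def F_def)
  moreover have down: "vector [0, 0, -1] \<in> F" using tcone_xbar_points(2) by (simp add: F_def)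
  moreover have "vector [1, -1, 0] \<notin> F" by (simp add: F_def)
  then have "F \<noteq> ?T" using tcone_xbar_points(3) by blast
  ultimately obtain a b where ab: "?T \<subseteq> {x. a \<bullet> x \<le> b}" "F = ?T \<inter> {x. a \<bullet> x = b}"
    unfolding facially_exposed_def pexposed_def by blast
  have "0 \<in> F" using tcone_xbar_points(1) by (simp add: F_def)
  then have b: "b = 0" using ab(2) by auto
  then have a3: "a$3 = 0" using down ab(2) by (auto simp: inner_real3)
  then have "a$1 = 0" using tcone_xbar_supporting_first_coeff ab(1) b by blast
  then have "vector [1, 0, 0] \<in> F"
    using tcone_xbar_first_unit ab(2) a3 b by (simp add: inner_real3)
  then show False by (simp add: F_def)
qed

section \<open>The tangent cone of K at the lift of xbar\<close>

lemma lift1_in_exK: "p \<in> exC \<Longrightarrow> lift1 p \<in> exK"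
  unfolding exK_eq_scaled_lift by (metis (mono_tags, lifting) mem_Collect_eq scaleR_one zero_le_one)

lemma tcone_lift0:
  assumes "d \<in> tcone x exC"
  shows "lift0 d \<in> tcone (lift1 x) exK"
proof -
  have "lift1 x + e *\<^sub>R lift0 v = lift1 (x + e *\<^sub>R v)" for e v
    by (simp add: lift1_eq_lift0 linear_add[OF linear_lift0] linear_scale[OF linear_lift0])
  then have "lift0 ` tcone x exC \<subseteq> tcone (lift1 x) exK"
    by (intro tcone_linear_image[OF linear_lift0]) (simp add: lift1_in_exK)
  then show ?thesis using assms by blast
qed

lemma tcone_lift_le:
  assumes "\<And>p. p \<in> exC \<Longrightarrow> a \<bullet> p \<le> b" "a \<bullet> x = b" "d \<in> tcone (lift1 x) exK"
  shows "vector [a$1, a$2, a$3, -b] \<bullet> d \<le> 0"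
proof (rule tcone_halfspace[OF exK_le_of_exC_le[OF assms(1)] _ assms(3)])
  show "vector [a$1, a$2, a$3, -b] \<bullet> lift1 x = 0"
    using assms(2) by (simp add: lift1_def inner_real3 inner_real4)
qed

lemma tcone_lift_xbar_second_le_fourth: "d \<in> tcone (lift1 xbar) exK \<Longrightarrow> d$2 \<le> d$4"
  using tcone_lift_le[OF exC_second_le_1 xbar_tight(1)] by (simp add: inner_real4)

lemma tcone_lift_xbar_first_nonneg:
  assumes "d \<in> tcone (lift1 xbar) exK" "d$2 = d$4"
  shows "0 \<le> d$1"
proof -
  have "- d$1 \<le> \<epsilon> * ((d$4 - d$3) / 2)" if "0 < \<epsilon>" for \<epsilon>
    using tcone_lift_le[OF exC_le_eps[OF that] xbar_tight(2) assms(1)] assms(2)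
    by (simp add: inner_real4 algebra_simps add_divide_distrib diff_divide_distrib)
  then have "- d$1 \<le> 0" by (intro le_zero_if_le_small_multiples[of 1 _ "(d$4 - d$3) / 2"]) auto
  then show ?thesis by simp
qed

lemma tcone_lift_xbar_face:
  "tcone (lift1 xbar) exK \<inter> {d. vector [0, 1, 0, -1] \<bullet> d = 0} face_of tcone (lift1 xbar) exK"
  "closed (tcone (lift1 xbar) exK \<inter> {d. vector [0, 1, 0, -1] \<bullet> d = 0})"
proof -
  have "convex exK" by (simp add: exK_eq_convex_cone_hull convex_convex_cone_hull)
  then show "tcone (lift1 xbar) exK \<inter> {d. vector [0, 1, 0, -1] \<bullet> d = 0} face_of tcone (lift1 xbar) exK"
    using tcone_lift_xbar_second_le_fourth
    by (intro face_of_Int_supporting_hyperplane_le convex_tcone lift1_in_exK xbar_in_exC)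
      (auto simp: inner_real4)
  show "closed (tcone (lift1 xbar) exK \<inter> {d. vector [0, 1, 0, -1] \<bullet> d = 0})"
    by (intro closed_Int closed_tcone closed_hyperplane)
qed

lemma tcone_tcone_lift_xbar:
  "vector [-1, 0, 0, 0] \<in> tcone (vector [0, 0, -1, 0]) (tcone (lift1 xbar) exK)"
proof (rule closed_contains_ray_limit[OF closed_tcone, where w = "vector [0, -1, 0, 0]"])
  fix u :: real assume u: "0 < u" "u \<le> 1"
  let ?s = "u / (1 + u\<^sup>2)"
  have "0 < ?s" using u by (simp add: add_pos_nonneg)
  have eq: "vector [0, 0, -1, 0] + ?s *\<^sub>R (vector [-1, 0, 0, 0] + u *\<^sub>R vector [0, -1, 0, 0])
      = lift0 (vector [-1 * ?s, - ?s * u, -1])"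
    by (simp add: lift0_def vec4_eq_iff)
  have "lift0 (vector [-1 * ?s, - ?s * u, -1]) \<in> tcone (lift1 xbar) exK"
    using tcone_lift0[OF tcone_xbar_bottom[of u "-1"]] u by simp
  then have "vector [0, 0, -1, 0] + ?s *\<^sub>R (vector [-1, 0, 0, 0] + u *\<^sub>R vector [0, -1, 0, 0])
      \<in> tcone (lift1 xbar) exK"
    unfolding eq .
  then show "vector [-1, 0, 0, 0] + u *\<^sub>R vector [0, -1, 0, 0]
      \<in> tcone (vector [0, 0, -1, 0]) (tcone (lift1 xbar) exK)"
    by (rule feasible_dir_in_tcone[OF \<open>0 < ?s\<close>])
qed

text \<open>The point (0, 0, -1, 0) of the face d2 = d4 of the tangent cone T of K at the lift of xbar
  witnesses that T is not tangentially exposed: (-1, 0, 0, 0) lies in the span of the face and is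
  tangent to T there, but not to the face, which lies in d1 \<ge> 0.\<close>

theorem exK_not_strongly_tangentially_exposed: "\<not> strongly_tangentially_exposed exK"
proof
  let ?T = "tcone (lift1 xbar) exK" and ?x = "vector [0, 0, -1, 0] :: real^4"
  define G where "G = ?T \<inter> {d. vector [0, 1, 0, -1] \<bullet> d = 0}"
  have lift: "lift0 d \<in> G" if "d \<in> tcone xbar exC" "d$2 = 0" for d
    using tcone_lift0[OF that(1)] that(2) by (simp add: G_def lift0_def inner_real4)
  assume "strongly_tangentially_exposed exK"
  moreover have "?T \<in> lex_tcones exK" by (intro lex_tcones.base lift1_in_exK xbar_in_exC)
  ultimately have "tangentially_exposed ?T" unfolding strongly_tangentially_exposed_def by blast
  moreover have "pface G ?T" using tcone_lift_xbar_face by (simp add: pface_def G_def)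
  moreover have "lift0 (vector [1, -1, 0]) \<in> ?T - G"
    using tcone_lift0[OF tcone_xbar_points(3)] by (simp add: G_def lift0_def inner_real4)
  moreover have "?x \<in> G"
    using lift[OF tcone_xbar_points(2)] by (simp add: lift0_def vec4_eq_iff)
  ultimately have tangent_eq: "tcone ?x ?T \<inter> span G = tcone ?x G"
    unfolding tangentially_exposed_def by blast
  have "vector [1, 0, 0, 0] \<in> G"
    using lift[OF tcone_xbar_first_unit] by (simp add: lift0_def vec4_eq_iff)
  moreover have "vector [-1, 0, 0, 0] = - (vector [1, 0, 0, 0] :: real^4)" by (simp add: vec4_eq_iff)
  ultimately have "vector [-1, 0, 0, 0] \<in> span G" by (metis span_base span_neg)
  then have tangent: "vector [-1, 0, 0, 0] \<in> tcone ?x G"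
    using tangent_eq tcone_tcone_lift_xbar by blast
  have "(vector [-1, 0, 0, 0] :: real^4) \<bullet> p \<le> 0" if "p \<in> G" for p
    using tcone_lift_xbar_first_nonneg that by (auto simp: G_def inner_real4)
  moreover have "(vector [-1, 0, 0, 0] :: real^4) \<bullet> ?x = 0" by (simp add: inner_real4)
  ultimately have "(vector [-1, 0, 0, 0] :: real^4) \<bullet> vector [-1, 0, 0, 0] \<le> 0"
    by (rule tcone_halfspace[OF _ _ tangent])
  then show False by (simp add: inner_real4)
qed

theorem mainTheorem8:
  shows "facially_dual_complete exK \<and> \<not> facially_exposed (tcone xbar exC)
         \<and> \<not> strongly_tangentially_exposed exK"
  using exK_facially_dual_complete tcone_xbar_not_facially_exposed exK_not_strongly_tangentially_exposed
  by blast

end
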